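(* Consider the expectation problem (EX). Suppose Assumption A and Assumption V hold and $g_k$ is the sampled estimate with the sample-size rule (so Condition C holds in (EX)). Run the Algorithm with Option I with $\tilde\eta_k=\tilde\eta\in(0,1)$, $\tilde\iota_0\in\left[0,\sqrt{\frac{1-\tilde\eta}{2}}\right)$, $\tilde\delta_k=\frac{1}{(k+1)^{1+\nu}}$ for all $k\ge0$ with some $\nu>0$, and $\alpha_k=\alpha\le\frac{1-\tilde\eta}{2L}$. For $\epsilon>0$ let $K_\epsilon$ be the first iteration index $k$ at which $\min\{\mathbb E[\|R^{true}_{\alpha}(x_k)\|^2],\|R^{true}_{\alpha}(x_k)\|^2\}\le\epsilon$. Then the number of stochastic gradient evaluations $\sum_{k=0}^{K_\epsilon-1}|S_k|$ is $\mathcal O(\epsilon^{-(2+\nu)})$. If instead $\tilde\delta_k=0$ for all $k$, it is $\mathcal O(\epsilon^{-2})$.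
   Context: Problem: minimize $\phi(x)=f(x)+h(x)$ over $x\in\mathbb{R}^d$. Assumption A: $f:\mathbb{R}^d\to\mathbb{R}$ is continuously differentiable with $L$-Lipschitz continuous gradient ($L>0$), and $h:\mathbb{R}^d\to\mathbb{R}\cup\{+\infty\}$ is closed, convex and proper; $\phi^*=\inf\phi>-\infty$. Expectation problem (EX): $f(x)=\mathbb E_{\xi\sim\mathcal P}[F(x,\xi)]$. For $\alpha>0$, $\mathrm{prox}_{\alpha,h}(y)=\arg\min_{x\in\mathbb{R}^d}\{h(x)+\frac{1}{2\alpha}\|x-y\|^2\}$. Algorithm: given $x_0\in\mathbb{R}^d$, $y_0=x_0$, step sizes $\alpha_k>0$ and parameters $\beta_k$, for $k=0,1,2,\dots$: compute an estimate $g_k$ of $\nabla f(y_k)$; set $x_{k+1}=\mathrm{prox}_{\alpha_k,h}(y_k-\alpha_kg_k)$; under Option I set $y_{k+1}=x_{k+1}$, under Option II set $y_{k+1}=x_{k+1}+\beta_{k+1}(x_{k+1}-x_k)$. Define $R_{\alpha_k}(y_k)=\frac{1}{\alpha_k}(y_k-x_{k+1})$, $\hat x_{k+1}=\mathrm{prox}_{\alpha_k,h}(y_k-\alpha_k\nabla f(y_k))$ and $R^{true}_{\alpha_k}(y_k)=\frac{1}{\alpha_k}(y_k-\hat x_{k+1})$. Let $\mathcal G_k$ be the $\sigma$-algebra generated by $x_0,g_0,\dots,g_{k-1}$, $\mathbb E_k[\cdot]=\mathbb E[\cdot\mid\mathcal G_k]$, and $\mathbb E[\cdot]$ is total expectation.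 Condition C in (EX): for all $k\ge0$, $\mathbb E_k[\|g_k-\nabla f(y_k)\|^2]\le\frac{\tilde\eta_k^2}{4}\|\mathbb E_k[R_{\alpha_k}(y_k)]\|^2+\tilde\iota_0^2\tilde\delta_k^2$ with $\tilde\eta_k\in[0,1)$, $\tilde\iota_0\ge0$, $\tilde\delta_k\ge0$. Assumption V in (EX): there is $\sigma\ge0$ with $\mathbb E[\|\nabla F(y_k,\xi)-\nabla f(y_k)\|^2\mid\mathcal G_k]\le\sigma^2$ for all $k$, $\xi\sim\mathcal P$ independent of $\mathcal G_k$. Sampled estimate with sample-size rule: $g_k=\frac{1}{|S_k|}\sum_{\xi\in S_k}\nabla F(y_k,\xi)$, $S_k$ a set of i.i.d. samples from $\mathcal P$ independent of $\mathcal G_k$, with $|S_k|=\left\lceil\sigma^2/\left(\frac{\tilde\eta_k^2}{4}\|\mathbb E_k[R_{\alpha_k}(y_k)]\|^2+\tilde\iota_0^2\tilde\delta_k^2\right)\right\rceil$; each iteration costs $|S_k|$ stochastic gradient evaluations. *)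

theory Defs
  imports "HOL-Probability.Probability"
begin

definition proper_fun :: "('a \<Rightarrow> ereal) \<Rightarrow> bool" where
  "proper_fun h \<longleftrightarrow> (\<forall>x. h x \<noteq> -\<infinity>) \<and> (\<exists>x. h x \<noteq> \<infinity>)"

definition convex_fun :: "('a::real_vector \<Rightarrow> ereal) \<Rightarrow> bool" where
  "convex_fun h \<longleftrightarrow> (\<forall>x y. \<forall>t\<in>{0..1::real}.
      h ((1 - t) *\<^sub>R x + t *\<^sub>R y) \<le> ereal (1 - t) * h x + ereal t * h y)"

definition closed_fun :: "('a::topological_space \<Rightarrow> ereal) \<Rightarrow> bool" where
  "closed_fun h \<longleftrightarrow> closed {(x, r::real). h x \<le> ereal r}"

definition prox :: "real \<Rightarrow> ('a::real_normed_vector \<Rightarrow> ereal) \<Rightarrow> 'a \<Rightarrow> 'a" where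
  "prox \<alpha> h y = (SOME z. \<forall>w. h z + ereal (norm (z - y)^2 / (2 * \<alpha>))
                             \<le> h w + ereal (norm (w - y)^2 / (2 * \<alpha>)))"

definition gen_sigma :: "'w measure \<Rightarrow> ('w \<Rightarrow> 'a::topological_space) set \<Rightarrow> 'w measure" where
  "gen_sigma M Xs = sigma (space M) (\<Union>X\<in>Xs. {X -` A \<inter> space M | A. A \<in> sets borel})"

definition vcond_exp :: "'w measure \<Rightarrow> 'w measure \<Rightarrow> ('w \<Rightarrow> 'a::euclidean_space) \<Rightarrow> 'w \<Rightarrow> 'a" where
  "vcond_exp M F X = (\<lambda>\<omega>. \<Sum>b\<in>Basis. real_cond_exp M F (\<lambda>\<omega>'. X \<omega>' \<bullet> b) \<omega> *\<^sub>R b)"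

end

theory Submission
  imports Defs
begin

(* Write Phi_k = phi(x_k) - m for a lower bound m of phi, R_k for the computed residual and
   e_k = grad f(x_k) - g_k.  One proximal gradient step gives
     Phi_(k+1) + alpha (1 - alpha L - eta/4) |R_k|^2 <= Phi_k + (alpha/eta) |e_k|^2,
   and the sample-size rule gives E|e_k|^2 <= eta^2/4 E|R_k|^2 + iota0^2 delta_k^2.  In both cases
   sum_k delta_k^2 < oo, so telescoping bounds sum_k E|R^true(x_k)|^2 by a constant B, and the
   expected stopping test holds for some k <= B/eps + 1.  Before stopping, |R^true(x_k)|^2 > eps on
   the sample path.  Since |R^true(x_k) - R_k| <= |e_k| and R^true(x_k) is known at time k,
   conditional Jensen gives |R^true(x_k) - E_k R_k|^2 <= sigma^2/|S_k| <= D_k, the threshold of the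
   rule; so D_k >= c eps and |S_k| <= C/eps.  Thus O(1/eps) iterations of O(1/eps) samples each are
   run, i.e. O(eps^-2) samples, which also gives the weaker O(eps^-(2+nu)) bound. *)

lemma norm_add_scaleR_power2:
  fixes a b :: "'a::real_inner"
  shows "(norm (a + t *\<^sub>R b))^2 = (norm a)^2 + 2 * t * (a \<bullet> b) + t^2 * (norm b)^2"
  by (simp only: power2_norm_eq_inner)
    (simp add: inner_add_left inner_add_right inner_commute algebra_simps power2_eq_square)

lemma abs_inner_le_half_sum_squares:
  fixes a b :: "'a::real_inner"
  shows "\<bar>a \<bullet> b\<bar> \<le> ((norm a)^2 + (norm b)^2) / 2"
proof -
  have "\<bar>a \<bullet> b\<bar> \<le> norm a * norm b" by (rule Cauchy_Schwarz_ineq2)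
  also have "\<dots> \<le> ((norm a)^2 + (norm b)^2) / 2"
    using sum_squares_bound[of "norm a" "norm b"] by (simp add: power2_eq_square field_simps)
  finally show ?thesis .
qed

lemma power2_norm_add_le:
  fixes a b :: "'a::real_normed_vector"
  shows "(norm (a + b))^2 \<le> 2 * (norm a)^2 + 2 * (norm b)^2"
proof -
  have "(norm (a + b))^2 \<le> (norm a + norm b)^2"
    by (intro power_mono norm_triangle_ineq) simp
  also have "\<dots> \<le> 2 * (norm a)^2 + 2 * (norm b)^2"
    using sum_squares_bound[of "norm a" "norm b"] by (simp add: power2_eq_square algebra_simps)
  finally show ?thesis .
qed

lemma le_of_forall_le_add_mult:
  fixes A B C :: real
  assumes le: "\<And>t. 0 < t \<Longrightarrow> t \<le> 1 \<Longrightarrow> A \<le> B + t * C"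
  shows "A \<le> B"
proof (rule field_le_epsilon)
  fix e :: real assume e: "0 < e"
  define t where "t = min 1 (e / (\<bar>C\<bar> + 1))"
  have t: "0 < t" "t \<le> 1" using e by (auto simp: t_def)
  have "t * C \<le> t * (\<bar>C\<bar> + 1)" using t by (intro mult_left_mono) auto
  also have "\<dots> \<le> e / (\<bar>C\<bar> + 1) * (\<bar>C\<bar> + 1)"
    by (intro mult_right_mono) (auto simp: t_def)
  finally have "t * C \<le> e" by simp
  then show "A \<le> B + e" using le[OF t] by linarith
qed

lemma quadratic_ge_discriminant:
  fixes a b d r :: real
  assumes "d > 0"
  shows "a - b^2 / (4 * d) \<le> a - b * r + d * r^2"
proof -
  have "0 \<le> d * (r - b / (2 * d))^2" using assms by simp
  also have "d * (r - b / (2 * d))^2 = d * r^2 - b * r + b^2 / (4 * d)"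
    using assms by (simp add: power2_eq_square field_simps)
  finally show ?thesis by simp
qed

lemma quadratic_sublevel_bound:
  fixes a b d r K :: real
  assumes d: "d > 0" and b: "b \<ge> 0" and le: "a - b * r + d * r^2 \<le> K"
  shows "r \<le> max 1 ((\<bar>K - a\<bar> + b) / d)"
proof (cases "r \<le> 1")
  case False
  then have "d * r * r \<le> \<bar>K - a\<bar> * r + b * r"
    using le mult_left_mono[of 1 r "\<bar>K - a\<bar>"] by (simp add: power2_eq_square mult.assoc)
  then have "d * r \<le> \<bar>K - a\<bar> + b" using False by (simp add: distrib_right[symmetric])
  then have "r \<le> (\<bar>K - a\<bar> + b) / d" using d by (simp add: field_simps)
  then show ?thesis by simp
qed simp

section \<open>Closed convex functions and the proximal operator\<close>

lemma closed_fun_sublevel: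
  fixes h :: "'a::topological_space \<Rightarrow> ereal"
  assumes "closed_fun h"
  shows "closed {z. h z \<le> ereal r}"
proof -
  have "{z. h z \<le> ereal r} = (\<lambda>z. (z, r)) -` {(x, s::real). h x \<le> ereal s}" by auto
  moreover have "continuous_on UNIV (\<lambda>z::'a. (z, r))" by (intro continuous_intros)
  ultimately show ?thesis using assms unfolding closed_fun_def by (metis closed_vimage)
qed

lemma borel_measurable_closed_fun:
  fixes h :: "'a::{second_countable_topology, topological_space} \<Rightarrow> ereal"
  assumes "closed_fun h" "proper_fun h"
  shows "h \<in> borel_measurable borel"
proof (rule borel_measurableI_le)
  fix y :: ereal
  show "{x \<in> space borel. h x \<le> y} \<in> sets borel"
  proof (cases y)
    case (real r)
    then show ?thesis using closed_fun_sublevel[OF assms(1), of r] by (simp add: borel_closed)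
  next
    case MInf
    then have "{x \<in> space borel. h x \<le> y} = {}" using assms(2) unfolding proper_fun_def by auto
    then show ?thesis by simp
  qed simp
qed

lemma closed_fun_add_continuous_le_of_tendsto:
  fixes h :: "'a::metric_space \<Rightarrow> ereal"
  assumes h: "closed_fun h" "\<And>z. h z \<noteq> -\<infinity>" and q: "continuous_on UNIV q"
    and lim: "zs \<longlonglongrightarrow> p"
    and ev: "eventually (\<lambda>n. h (zs n) + ereal (q (zs n)) \<le> ereal t) sequentially"
  shows "h p + ereal (q p) \<le> ereal t"
proof -
  define E where "E = {(z, s::real). h z \<le> ereal s}"
  have "closed E" using h(1) unfolding closed_fun_def E_def .
  moreover have "eventually (\<lambda>n. (zs n, t - q (zs n)) \<in> E) sequentially"
  proof (rule eventually_mono[OF ev])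
    fix n assume "h (zs n) + ereal (q (zs n)) \<le> ereal t"
    then show "(zs n, t - q (zs n)) \<in> E" using h(2)[of "zs n"] unfolding E_def by (cases "h (zs n)") auto
  qed
  moreover have "(\<lambda>n. (zs n, t - q (zs n))) \<longlonglongrightarrow> (p, t - q p)"
    using lim continuous_on_tendsto_compose[OF q lim] by (auto intro!: tendsto_intros)
  ultimately have "(p, t - q p) \<in> E" by (metis Lim_in_closed_set trivial_limit_sequentially)
  then show ?thesis using h(2)[of p] unfolding E_def by (cases "h p") auto
qed

lemma closed_fun_add_continuous_attains_le:
  fixes h :: "'a::euclidean_space \<Rightarrow> ereal"
  assumes h: "closed_fun h" "\<And>z. h z \<noteq> -\<infinity>" and q: "continuous_on UNIV q"
    and zs: "\<And>n. h (zs n) + ereal (q (zs n)) < ereal (m + 1 / Suc n)" and bdd: "bounded (range zs)"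
  shows "\<exists>p. h p + ereal (q p) \<le> ereal m"
proof -
  obtain p r where r: "strict_mono r" and lim: "(zs \<circ> r) \<longlonglongrightarrow> p"
    using bounded_imp_convergent_subsequence[OF bdd] by blast
  have "h p + ereal (q p) \<le> ereal m"
  proof (rule ereal_le_epsilon2)
    fix e :: real assume e: "0 < e"
    obtain n0 :: nat where n0: "1 / Suc n0 < e"
      using reals_Archimedean[OF e] by (auto simp: inverse_eq_divide)
    have "eventually (\<lambda>n. h ((zs \<circ> r) n) + ereal (q ((zs \<circ> r) n)) \<le> ereal (m + e)) sequentially"
    proof (rule eventually_sequentiallyI[of n0])
      fix n assume "n0 \<le> n"
      then have "1 / real (Suc (r n)) \<le> 1 / Suc n0"
        using seq_suble[OF r, of n] by (simp add: frac_le)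
      then show "h ((zs \<circ> r) n) + ereal (q ((zs \<circ> r) n)) \<le> ereal (m + e)"
        using zs[of "r n"] n0 by (simp add: order.trans[OF less_imp_le])
    qed
    then show "h p + ereal (q p) \<le> ereal m + ereal e"
      using closed_fun_add_continuous_le_of_tendsto[OF h q lim] by simp
  qed
  then show ?thesis ..
qed

definition is_prox_point :: "real \<Rightarrow> ('a::real_normed_vector \<Rightarrow> ereal) \<Rightarrow> 'a \<Rightarrow> 'a \<Rightarrow> bool" where
  "is_prox_point \<alpha> h y p \<longleftrightarrow>
     (\<forall>w. h p + ereal ((norm (p - y))^2 / (2 * \<alpha>)) \<le> h w + ereal ((norm (w - y))^2 / (2 * \<alpha>)))"

lemma is_prox_point_prox: "\<exists>p. is_prox_point \<alpha> h y p \<Longrightarrow> is_prox_point \<alpha> h y (prox \<alpha> h y)"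
  unfolding prox_def is_prox_point_def by (rule someI_ex)

lemma prox_minimizer_exists:
  fixes h :: "'a::euclidean_space \<Rightarrow> ereal" and y :: 'a
  assumes h: "proper_fun h" "closed_fun h" and \<alpha>: "\<alpha> > 0"
    and lb: "\<And>z. ereal (a - b * norm (z - y) - c * (norm (z - y))^2) \<le> h z"
    and b: "b \<ge> 0" and c: "c < 1 / (2 * \<alpha>)"
  shows "\<exists>p. is_prox_point \<alpha> h y p"
proof -
  define q where "q z = (norm (z - y))^2 / (2 * \<alpha>)" for z
  define \<psi> where "\<psi> z = h z + ereal (q z)" for z
  define d where "d = 1 / (2 * \<alpha>) - c"
  have d: "d > 0" using c by (simp add: d_def)
  have h_ninf: "h z \<noteq> -\<infinity>" for z using h(1) unfolding proper_fun_def by auto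
  have \<psi>_lb: "ereal (a - b * norm (z - y) + d * (norm (z - y))^2) \<le> \<psi> z" for z
  proof -
    have "ereal (a - b * norm (z - y) + d * (norm (z - y))^2)
        = ereal (a - b * norm (z - y) - c * (norm (z - y))^2) + ereal (q z)"
      by (simp add: d_def q_def algebra_simps)
    also have "\<dots> \<le> \<psi> z" unfolding \<psi>_def by (intro add_right_mono lb)
    finally show ?thesis .
  qed
  define \<mu> where "\<mu> = (INF z. \<psi> z)"
  have \<mu>_le: "\<mu> \<le> \<psi> z" for z unfolding \<mu>_def by (rule INF_lower) simp
  have "ereal (a - b^2 / (4 * d)) \<le> \<mu>"
    unfolding \<mu>_def using \<psi>_lb quadratic_ge_discriminant[OF d]
    by (intro INF_greatest) (meson ereal_less_eq(3) order_trans)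
  moreover obtain z0 where "h z0 \<noteq> \<infinity>" using h(1) unfolding proper_fun_def by auto
  then have "\<mu> \<noteq> \<infinity>" using \<mu>_le[of z0] h_ninf[of z0] unfolding \<psi>_def by auto
  ultimately obtain m where m: "\<mu> = ereal m" by (cases \<mu>) auto
  have "\<exists>z. \<psi> z < ereal (m + 1 / Suc n)" for n :: nat
  proof -
    have "\<mu> < ereal (m + 1 / Suc n)" using m by simp
    then show ?thesis unfolding \<mu>_def by (simp add: INF_less_iff)
  qed
  then obtain zs where zs: "\<And>n. \<psi> (zs n) < ereal (m + 1 / Suc n)" by metis
  have "norm (zs n - y) \<le> max 1 ((\<bar>(m + 1) - a\<bar> + b) / d)" for n
  proof (rule quadratic_sublevel_bound[OF d b])
    have "\<psi> (zs n) \<le> ereal (m + 1)"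
      using zs[of n] by (rule order.trans[OF less_imp_le]) simp
    then show "a - b * norm (zs n - y) + d * (norm (zs n - y))^2 \<le> m + 1"
      using \<psi>_lb[of "zs n"] by (metis ereal_less_eq(3) order_trans)
  qed
  then have "norm (zs n) \<le> norm y + max 1 ((\<bar>(m + 1) - a\<bar> + b) / d)" for n
    using norm_triangle_ineq2[of "zs n" y] by (smt (verit))
  then have "bounded (range zs)" unfolding bounded_iff by blast
  moreover have "continuous_on UNIV q" unfolding q_def using \<alpha> by (auto intro!: continuous_intros)
  ultimately obtain p where "\<psi> p \<le> ereal m"
    using closed_fun_add_continuous_attains_le[OF h(2) h_ninf _ zs[unfolded \<psi>_def]] unfolding \<psi>_def by blast
  then show ?thesis using m \<mu>_le unfolding is_prox_point_def \<psi>_def q_def by (metis order_trans)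
qed

lemma is_prox_point_variational:
  fixes h :: "'a::real_inner \<Rightarrow> ereal"
  assumes h: "convex_fun h" "proper_fun h" and \<alpha>: "\<alpha> > 0"
    and p: "is_prox_point \<alpha> h y p" and hw: "h w \<noteq> \<infinity>"
  shows "h p \<noteq> \<infinity>" "h p + ereal (((y - p) \<bullet> (w - p)) / \<alpha>) \<le> h w"
proof -
  have h_ninf: "h z \<noteq> -\<infinity>" for z using h(2) unfolding proper_fun_def by auto
  have p_min: "h p + ereal ((norm (p - y))^2 / (2 * \<alpha>)) \<le> h z + ereal ((norm (z - y))^2 / (2 * \<alpha>))" for z
    using p unfolding is_prox_point_def by blast
  obtain hw' where hw': "h w = ereal hw'" using hw h_ninf[of w] by (cases "h w") auto
  show hp: "h p \<noteq> \<infinity>" using p_min[of w] hw' by auto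
  obtain hp' where hp': "h p = ereal hp'" using hp h_ninf[of p] by (cases "h p") auto
  \<comment> \<open>compare p with the points of the segment from p towards w\<close>
  define A where "A = (norm (p - y))^2 / (2 * \<alpha>)"
  define X where "X = (p - y) \<bullet> (w - p)"
  define Y where "Y = (norm (w - p))^2"
  have "hp' \<le> hw' + X / \<alpha> + t * (Y / (2 * \<alpha>))" if t: "0 < t" "t \<le> 1" for t
  proof -
    define wt where "wt = (1 - t) *\<^sub>R p + t *\<^sub>R w"
    have "h wt \<le> ereal (1 - t) * h p + ereal t * h w"
      using h(1) t unfolding convex_fun_def wt_def by auto
    then have hwt: "h wt \<le> ereal ((1 - t) * hp' + t * hw')" using hp' hw' by simp
    have "ereal (hp' + (norm (p - y))^2 / (2 * \<alpha>)) \<le> h wt + ereal ((norm (wt - y))^2 / (2 * \<alpha>))"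
      using p_min[of wt] hp' by simp
    also have "\<dots> \<le> ereal ((1 - t) * hp' + t * hw') + ereal ((norm (wt - y))^2 / (2 * \<alpha>))"
      by (intro add_right_mono hwt)
    finally have "hp' + (norm (p - y))^2 / (2 * \<alpha>) \<le> (1 - t) * hp' + t * hw' + (norm (wt - y))^2 / (2 * \<alpha>)"
      by simp
    then have ineq: "hp' + A \<le> hp' - t * hp' + t * hw' + (norm (wt - y))^2 / (2 * \<alpha>)"
      by (simp add: A_def left_diff_distrib)
    have "wt - y = (p - y) + t *\<^sub>R (w - p)" unfolding wt_def by (simp add: algebra_simps)
    then have "(norm (wt - y))^2 = (norm (p - y))^2 + 2 * t * X + t^2 * Y"
      unfolding X_def Y_def by (simp only: norm_add_scaleR_power2)
    then have "(norm (wt - y))^2 / (2 * \<alpha>) = A + t * (X / \<alpha>) + t * (t * (Y / (2 * \<alpha>)))"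
      unfolding A_def by (simp add: add_divide_distrib power2_eq_square)
    with ineq have "t * hp' \<le> t * (hw' + X / \<alpha> + t * (Y / (2 * \<alpha>)))"
      by (simp add: distrib_left)
    then show ?thesis using t by simp
  qed
  then have "hp' \<le> hw' + X / \<alpha>" by (rule le_of_forall_le_add_mult)
  then show "h p + ereal (((y - p) \<bullet> (w - p)) / \<alpha>) \<le> h w"
    using hp' hw' unfolding X_def by (simp add: inner_diff_left inner_commute algebra_simps diff_divide_distrib)
qed

lemma is_prox_point_nonexpansive:
  fixes h :: "'a::real_inner \<Rightarrow> ereal"
  assumes h: "convex_fun h" "proper_fun h" and \<alpha>: "\<alpha> > 0"
    and p1: "is_prox_point \<alpha> h y1 p1" and p2: "is_prox_point \<alpha> h y2 p2"
    and fin: "h p1 \<noteq> \<infinity>" "h p2 \<noteq> \<infinity>"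
  shows "norm (p1 - p2) \<le> norm (y1 - y2)"
proof -
  have h_ninf: "h z \<noteq> -\<infinity>" for z using h(2) unfolding proper_fun_def by auto
  obtain a1 a2 where a: "h p1 = ereal a1" "h p2 = ereal a2"
    using fin h_ninf by (metis ereal_cases)
  have "a1 + ((y1 - p1) \<bullet> (p2 - p1)) / \<alpha> \<le> a2" "a2 + ((y2 - p2) \<bullet> (p1 - p2)) / \<alpha> \<le> a1"
    using is_prox_point_variational(2)[OF h \<alpha> p1 fin(2)] is_prox_point_variational(2)[OF h \<alpha> p2 fin(1)] a
    by simp_all
  then have "((y1 - p1) \<bullet> (p2 - p1) + (y2 - p2) \<bullet> (p1 - p2)) / \<alpha> \<le> 0"
    by (simp add: add_divide_distrib)
  then have "(y1 - p1) \<bullet> (p2 - p1) + (y2 - p2) \<bullet> (p1 - p2) \<le> 0"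
    using \<alpha> by (simp add: divide_le_0_iff)
  then have "(norm (p1 - p2))^2 \<le> (y1 - y2) \<bullet> (p1 - p2)"
    by (simp add: power2_norm_eq_inner inner_diff_left inner_diff_right inner_commute algebra_simps)
  also have "\<dots> \<le> norm (y1 - y2) * norm (p1 - p2)" by (rule norm_cauchy_schwarz)
  finally show ?thesis
    by (cases "norm (p1 - p2) = 0") (auto simp: power2_eq_square mult_le_cancel_right)
qed

lemma descent_lemma:
  fixes f :: "'a::euclidean_space \<Rightarrow> real"
  assumes f: "\<And>z. (f has_derivative (\<lambda>v. gradf z \<bullet> v)) (at z)"
    and lip: "\<And>z w. norm (gradf z - gradf w) \<le> L * norm (z - w)" and L: "L \<ge> 0"
  shows "f z \<le> f w + gradf w \<bullet> (z - w) + L * (norm (z - w))^2"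
proof -
  define d where "d = z - w"
  define g where "g t = f (w + t *\<^sub>R d)" for t :: real
  have "DERIV g t :> gradf (w + t *\<^sub>R d) \<bullet> d" for t
  proof -
    have "((\<lambda>t. w + t *\<^sub>R d) has_derivative (\<lambda>u. u *\<^sub>R d)) (at t)"
      by (auto intro!: derivative_eq_intros)
    from has_derivative_compose[OF this f]
    show ?thesis unfolding g_def has_field_derivative_def by (simp add: mult_commute_abs)
  qed
  then obtain \<tau> where \<tau>: "0 < \<tau>" "\<tau> < 1" "g 1 - g 0 = gradf (w + \<tau> *\<^sub>R d) \<bullet> d"
    using MVT2[of 0 1 g "\<lambda>t. gradf (w + t *\<^sub>R d) \<bullet> d"] by auto
  have "(gradf (w + \<tau> *\<^sub>R d) - gradf w) \<bullet> d \<le> norm (gradf (w + \<tau> *\<^sub>R d) - gradf w) * norm d"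
    by (rule norm_cauchy_schwarz)
  also have "\<dots> \<le> (L * \<tau> * norm d) * norm d"
    using lip[of "w + \<tau> *\<^sub>R d" w] \<tau> by (intro mult_right_mono) auto
  also have "\<dots> = L * (\<tau> * (norm d)^2)" by (simp add: power2_eq_square)
  also have "\<dots> \<le> L * (norm d)^2"
    using \<tau> L by (intro mult_left_mono) (simp_all add: mult_left_le_one_le)
  finally show ?thesis using \<tau> unfolding g_def d_def by (simp add: inner_diff_left)
qed

section \<open>Measurability and conditional expectation\<close>

lemma borel_measurable_caratheodory:
  fixes F :: "'a::euclidean_space \<Rightarrow> 'b \<Rightarrow> real"
  assumes cont: "\<And>s. s \<in> space P \<Longrightarrow> continuous_on UNIV (\<lambda>z. F z s)"
    and meas: "\<And>z. F z \<in> borel_measurable P"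
  shows "(\<lambda>p. F (fst p) (snd p)) \<in> borel_measurable (borel \<Otimes>\<^sub>M P)"
proof -
  obtain D :: "'a set" where D: "countable D" "\<And>U. open U \<Longrightarrow> U \<noteq> {} \<Longrightarrow> \<exists>y\<in>D. y \<in> U"
    using countable_dense_exists by blast
  define d where "d = from_nat_into D"
  have "D \<noteq> {}" using D(2)[of UNIV] by auto
  then have rd: "range d = D" unfolding d_def using D(1) by simp
  have "\<exists>i. dist z (d i) < 1 / Suc n" for z n
    using D(2)[of "ball z (1 / Suc n)"] rd by (auto simp: dist_commute)
  then have idx: "dist z (d (LEAST i. dist z (d i) < 1 / Suc n)) < 1 / Suc n" for z n
    by (rule LeastI_ex)
  \<comment> \<open>approximate the first argument by a measurable, countably-valued selection from D\<close>
  define u where "u n p = F (d (LEAST i. dist (fst p) (d i) < 1 / Suc n)) (snd p)" for n p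
  have u_meas: "u n \<in> borel_measurable (borel \<Otimes>\<^sub>M P)" for n
  proof -
    have "(\<lambda>p. F (d i) (snd p)) \<in> borel_measurable (borel \<Otimes>\<^sub>M P)" for i
      by (rule measurable_compose[OF measurable_snd meas])
    moreover have "(\<lambda>p. LEAST i. dist (fst p) (d i) < 1 / Suc n) \<in> measurable (borel \<Otimes>\<^sub>M P) (count_space UNIV)"
      by measurable
    ultimately show ?thesis unfolding u_def by (rule measurable_compose_countable)
  qed
  have approx: "(\<lambda>n. d (LEAST i. dist z (d i) < 1 / Suc n)) \<longlonglongrightarrow> z" for z
  proof (rule tendstoI)
    fix e :: real assume "e > 0"
    then obtain n0 :: nat where n0: "1 / Suc n0 < e" using reals_Archimedean by (auto simp: inverse_eq_divide)
    show "eventually (\<lambda>n. dist (d (LEAST i. dist z (d i) < 1 / Suc n)) z < e) sequentially"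
    proof (rule eventually_sequentiallyI[of n0])
      fix n assume "n0 \<le> n"
      then have "1 / real (Suc n) \<le> 1 / Suc n0" by (simp add: frac_le)
      then show "dist (d (LEAST i. dist z (d i) < 1 / Suc n)) z < e"
        using idx[of z n] n0 by (simp add: dist_commute)
    qed
  qed
  show ?thesis
  proof (rule borel_measurable_LIMSEQ_real[OF _ u_meas])
    fix p :: "'a \<times> 'b" assume "p \<in> space (borel \<Otimes>\<^sub>M P)"
    then have "snd p \<in> space P" by (auto simp: space_pair_measure)
    from continuous_on_tendsto_compose[OF cont[OF this] approx[of "fst p"]]
    show "(\<lambda>n. u n p) \<longlonglongrightarrow> F (fst p) (snd p)" unfolding u_def by simp
  qed
qed

lemma borel_measurable_param_gradient:
  fixes F :: "'a::euclidean_space \<Rightarrow> 'b \<Rightarrow> real" and gradF :: "'a \<Rightarrow> 'b \<Rightarrow> 'a"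
  assumes der: "\<And>z s. s \<in> space P \<Longrightarrow> ((\<lambda>u. F u s) has_derivative (\<lambda>v. gradF z s \<bullet> v)) (at z)"
    and meas: "\<And>z. F z \<in> borel_measurable P"
  shows "(\<lambda>p. gradF (fst p) (snd p)) \<in> borel_measurable (borel \<Otimes>\<^sub>M P)"
proof -
  have "continuous_on UNIV (\<lambda>z. F z s)" if "s \<in> space P" for s
    using der[OF that] by (meson continuous_at_imp_continuous_on has_derivative_continuous)
  then have FJ[measurable]: "(\<lambda>p. F (fst p) (snd p)) \<in> borel_measurable (borel \<Otimes>\<^sub>M P)"
    using meas by (rule borel_measurable_caratheodory)
  have inv: "filterlim (\<lambda>n. inverse (real (Suc n))) (at 0) sequentially"
    using LIMSEQ_inverse_real_of_nat by (auto simp: filterlim_at)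
  \<comment> \<open>each partial derivative is a pointwise limit of measurable difference quotients\<close>
  have "(\<lambda>p. gradF (fst p) (snd p) \<bullet> b) \<in> borel_measurable (borel \<Otimes>\<^sub>M P)" if b: "b \<in> Basis" for b
  proof (rule borel_measurable_LIMSEQ_real)
    define t where "t n = inverse (real (Suc n))" for n
    show "(\<lambda>p. (F (fst p + t n *\<^sub>R b) (snd p) - F (fst p) (snd p)) / t n) \<in> borel_measurable (borel \<Otimes>\<^sub>M P)" for n
    proof -
      have "(\<lambda>p. (fst p + t n *\<^sub>R b, snd p)) \<in> measurable (borel \<Otimes>\<^sub>M P) (borel \<Otimes>\<^sub>M P)"
        by measurable
      from measurable_compose[OF this FJ]
      have [measurable]: "(\<lambda>p. F (fst p + t n *\<^sub>R b) (snd p)) \<in> borel_measurable (borel \<Otimes>\<^sub>M P)"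
        by simp
      show ?thesis by measurable
    qed
    fix p :: "'a \<times> 'b" assume "p \<in> space (borel \<Otimes>\<^sub>M P)"
    then have s: "snd p \<in> space P" by (auto simp: space_pair_measure)
    have "((\<lambda>t. fst p + t *\<^sub>R b) has_derivative (\<lambda>u. u *\<^sub>R b)) (at 0)"
      by (auto intro!: derivative_eq_intros)
    from has_derivative_compose[OF this der[OF s, of "fst p + 0 *\<^sub>R b"]]
    have "DERIV (\<lambda>t. F (fst p + t *\<^sub>R b) (snd p)) 0 :> gradF (fst p) (snd p) \<bullet> b"
      by (simp add: has_field_derivative_def mult_commute_abs)
    then have "((\<lambda>t. (F (fst p + t *\<^sub>R b) (snd p) - F (fst p) (snd p)) / t) \<longlongrightarrow> gradF (fst p) (snd p) \<bullet> b) (at 0)"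
      unfolding DERIV_def by simp
    from filterlim_compose[OF this inv]
    show "(\<lambda>n. (F (fst p + t n *\<^sub>R b) (snd p) - F (fst p) (snd p)) / t n) \<longlonglongrightarrow> gradF (fst p) (snd p) \<bullet> b"
      unfolding t_def by simp
  qed
  then show ?thesis by (subst borel_measurable_euclidean_space) auto
qed

lemma measurable_Pair_restr_to_subalg:
  assumes H: "subalgebra M H" and X: "X \<in> measurable M S"
  shows "(\<lambda>\<omega>. (\<omega>, X \<omega>)) \<in> measurable M (restr_to_subalg M H \<Otimes>\<^sub>M S)"
proof (rule measurable_Pair[OF _ X])
  show "(\<lambda>\<omega>. \<omega>) \<in> measurable M (restr_to_subalg M H)"
    using H by (intro measurableI) (auto simp: sets_restr_to_subalg space_restr_to_subalg subalgebra_def)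
qed

lemma distr_Pair_indep_eq_pair_measure:
  assumes M: "prob_space M" and H: "subalgebra M H"
    and X: "X \<in> measurable M S" "distr M S X = S"
    and indep: "\<And>A B. A \<in> sets H \<Longrightarrow> B \<in> sets S \<Longrightarrow>
        measure M (A \<inter> (X -` B \<inter> space M)) = measure M A * measure M (X -` B \<inter> space M)"
  shows "distr M (restr_to_subalg M H \<Otimes>\<^sub>M S) (\<lambda>\<omega>. (\<omega>, X \<omega>)) = restr_to_subalg M H \<Otimes>\<^sub>M S"
proof (rule pair_measure_eqI[symmetric])
  interpret M: prob_space M by fact
  interpret MH: prob_space "restr_to_subalg M H" by (rule prob_space_restr_to_subalg[OF H M])
  interpret S: prob_space S using M.prob_space_distr[OF X(1)] X(2) by simp
  show "sigma_finite_measure (restr_to_subalg M H)" "sigma_finite_measure S" ..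
  fix A B assume A: "A \<in> sets (restr_to_subalg M H)" and B: "B \<in> sets S"
  then have A_H: "A \<in> sets H" by (simp add: sets_restr_to_subalg[OF H])
  then have A_M: "A \<in> sets M" using H by (auto simp: subalgebra_def)
  have XB: "X -` B \<inter> space M \<in> sets M" using X(1) B by (simp add: measurable_def)
  have "(\<lambda>\<omega>. (\<omega>, X \<omega>)) -` (A \<times> B) \<inter> space M = A \<inter> (X -` B \<inter> space M)"
    using sets.sets_into_space[OF A_M] by auto
  then have "emeasure (distr M (restr_to_subalg M H \<Otimes>\<^sub>M S) (\<lambda>\<omega>. (\<omega>, X \<omega>))) (A \<times> B)
      = emeasure M (A \<inter> (X -` B \<inter> space M))"
    using emeasure_distr[OF measurable_Pair_restr_to_subalg[OF H X(1)], of "A \<times> B"] A B by simp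
  also have "\<dots> = emeasure M A * emeasure M (X -` B \<inter> space M)"
    using indep[OF A_H B] A_M XB by (simp add: M.emeasure_eq_measure ennreal_mult)
  also have "emeasure M A = emeasure (restr_to_subalg M H) A"
    using emeasure_restr_to_subalg[OF H A_H] by simp
  also have "emeasure M (X -` B \<inter> space M) = emeasure S B"
    using emeasure_distr[OF X(1) B] X(2) by simp
  finally show "emeasure (restr_to_subalg M H) A * emeasure S B
      = emeasure (distr M (restr_to_subalg M H \<Otimes>\<^sub>M S) (\<lambda>\<omega>. (\<omega>, X \<omega>))) (A \<times> B)" by simp
qed simp

lemma integral_freeze_eq_0:
  fixes \<Phi> :: "'w \<times> 'b \<Rightarrow> real"
  assumes M: "prob_space M" and H: "subalgebra M H"
    and X: "X \<in> measurable M S" "distr M S X = S"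
    and indep: "\<And>A B. A \<in> sets H \<Longrightarrow> B \<in> sets S \<Longrightarrow>
        measure M (A \<inter> (X -` B \<inter> space M)) = measure M A * measure M (X -` B \<inter> space M)"
    and \<Phi>: "\<Phi> \<in> borel_measurable (H \<Otimes>\<^sub>M S)" "integrable M (\<lambda>\<omega>. \<Phi> (\<omega>, X \<omega>))"
    and inner_0: "\<And>\<omega>. \<omega> \<in> space M \<Longrightarrow> (\<integral>s. \<Phi> (\<omega>, s) \<partial>S) = 0"
  shows "(\<integral>\<omega>. \<Phi> (\<omega>, X \<omega>) \<partial>M) = 0"
proof -
  define MH where "MH = restr_to_subalg M H"
  interpret M: prob_space M by fact
  interpret MH: prob_space MH unfolding MH_def by (rule prob_space_restr_to_subalg[OF H M])
  interpret S: prob_space S using M.prob_space_distr[OF X(1)] X(2) by simp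
  interpret PS: pair_sigma_finite MH S ..
  note pair = measurable_Pair_restr_to_subalg[OF H X(1), folded MH_def]
  note prod = distr_Pair_indep_eq_pair_measure[OF M H X indep, folded MH_def]
  have \<Phi>_MH: "\<Phi> \<in> borel_measurable (MH \<Otimes>\<^sub>M S)"
    using \<Phi>(1) H unfolding MH_def
    by (simp add: measurable_def space_pair_measure sets_restr_to_subalg space_restr_to_subalg
        sets_pair_measure_cong[OF sets_restr_to_subalg[OF H] refl] subalgebra_def)
  have "integrable (distr M (MH \<Otimes>\<^sub>M S) (\<lambda>\<omega>. (\<omega>, X \<omega>))) \<Phi>"
    by (subst integrable_distr_eq[OF pair \<Phi>_MH]) (rule \<Phi>(2))
  then have int: "integrable (MH \<Otimes>\<^sub>M S) \<Phi>" by (simp only: prod)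
  have "(\<integral>\<omega>. \<Phi> (\<omega>, X \<omega>) \<partial>M) = integral\<^sup>L (distr M (MH \<Otimes>\<^sub>M S) (\<lambda>\<omega>. (\<omega>, X \<omega>))) \<Phi>"
    by (rule integral_distr[OF pair \<Phi>_MH, symmetric])
  also have "\<dots> = integral\<^sup>L (MH \<Otimes>\<^sub>M S) \<Phi>" by (simp only: prod)
  also have "\<dots> = (\<integral>\<omega>. (\<integral>s. \<Phi> (\<omega>, s) \<partial>S) \<partial>MH)"
    by (rule PS.integral_fst'[OF int, symmetric])
  also have "\<dots> = (\<integral>\<omega>. 0 \<partial>MH)"
    by (rule Bochner_Integration.integral_cong) (auto simp: MH_def space_restr_to_subalg inner_0)
  finally show ?thesis by simp
qed

lemma space_gen_sigma[simp]: "space (gen_sigma M Xs) = space M"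
  unfolding gen_sigma_def by (simp add: space_measure_of_conv)

lemma sets_gen_sigma:
  "sets (gen_sigma M Xs) = sigma_sets (space M) (\<Union>X\<in>Xs. {X -` A \<inter> space M | A. A \<in> sets borel})"
  unfolding gen_sigma_def by (rule sets_measure_of) auto

lemma subalgebra_gen_sigma:
  assumes "\<And>X. X \<in> Xs \<Longrightarrow> X \<in> borel_measurable M"
  shows "subalgebra M (gen_sigma M Xs)"
  unfolding subalgebra_def
proof
  have "(\<Union>X\<in>Xs. {X -` A \<inter> space M | A. A \<in> sets borel}) \<subseteq> sets M"
    using assms by (auto simp: measurable_def)
  then show "sets (gen_sigma M Xs) \<subseteq> sets M"
    unfolding sets_gen_sigma by (rule sets.sigma_sets_subset)
qed simp

lemma measurable_gen_sigma:
  assumes "X \<in> Xs"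
  shows "X \<in> borel_measurable (gen_sigma M Xs)"
proof (rule measurableI)
  fix A :: "'b set" assume "A \<in> sets borel"
  then show "X -` A \<inter> space (gen_sigma M Xs) \<in> sets (gen_sigma M Xs)"
    using assms unfolding sets_gen_sigma by (auto intro: sigma_sets.Basic)
qed simp

lemma sets_gen_sigma_mono:
  assumes "Xs \<subseteq> Ys"
  shows "sets (gen_sigma M Xs) \<subseteq> sets (gen_sigma M Ys)"
  unfolding sets_gen_sigma by (rule sigma_sets_subseteq) (use assms in auto)

lemma integrable_bounded_mult:
  fixes f g :: "'a \<Rightarrow> real"
  assumes g: "integrable M g" and f: "f \<in> borel_measurable M"
    and bound: "\<And>\<omega>. \<omega> \<in> space M \<Longrightarrow> \<bar>f \<omega>\<bar> \<le> c"
  shows "integrable M (\<lambda>\<omega>. f \<omega> * g \<omega>)"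
proof (rule Bochner_Integration.integrable_bound[where f="\<lambda>\<omega>. \<bar>c\<bar> * g \<omega>"])
  show "AE \<omega> in M. norm (f \<omega> * g \<omega>) \<le> norm (\<bar>c\<bar> * g \<omega>)"
    using bound by (intro AE_I2) (force simp: abs_mult intro: mult_right_mono)
qed (use f g in auto)

lemma integrable_inner_bounded:
  fixes X W :: "'a \<Rightarrow> 'b::euclidean_space"
  assumes X: "integrable M X" and W: "W \<in> borel_measurable M" and bound: "\<And>\<omega>. norm (W \<omega>) \<le> c"
  shows "integrable M (\<lambda>\<omega>. W \<omega> \<bullet> X \<omega>)"
proof (rule Bochner_Integration.integrable_bound[where f="\<lambda>\<omega>. \<bar>c\<bar> * norm (X \<omega>)"])
  show "AE \<omega> in M. norm (W \<omega> \<bullet> X \<omega>) \<le> norm (\<bar>c\<bar> * norm (X \<omega>))"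
  proof (rule AE_I2)
    fix \<omega> have "\<bar>W \<omega> \<bullet> X \<omega>\<bar> \<le> norm (W \<omega>) * norm (X \<omega>)" by (rule Cauchy_Schwarz_ineq2)
    also have "\<dots> \<le> \<bar>c\<bar> * norm (X \<omega>)" using bound[of \<omega>] by (intro mult_right_mono) auto
    finally show "norm (W \<omega> \<bullet> X \<omega>) \<le> norm (\<bar>c\<bar> * norm (X \<omega>))" by simp
  qed
qed (use X W in simp_all)

lemma borel_measurable_vcond_exp[measurable]: "vcond_exp M F X \<in> borel_measurable F"
  unfolding vcond_exp_def by measurable

context prob_space
begin

lemma integral_inner_vcond_exp:
  fixes X W :: "'a \<Rightarrow> 'b::euclidean_space"
  assumes F: "subalgebra M F" and X: "integrable M X" and W: "W \<in> borel_measurable F"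
    and W_bound: "\<And>\<omega>. \<omega> \<in> space M \<Longrightarrow> norm (W \<omega>) \<le> c"
  shows "integrable M (\<lambda>\<omega>. W \<omega> \<bullet> vcond_exp M F X \<omega>)"
    "(\<integral>\<omega>. W \<omega> \<bullet> vcond_exp M F X \<omega> \<partial>M) = (\<integral>\<omega>. W \<omega> \<bullet> X \<omega> \<partial>M)"
proof -
  interpret F: sigma_finite_subalgebra M F
    by (rule finite_measure_subalgebra_is_sigma_finite)
      (simp add: finite_measure_subalgebra_def finite_measure_subalgebra_axioms_def finite_measure_axioms F)
  have [measurable]: "W \<in> borel_measurable M" by (rule measurable_from_subalg[OF F W])
  have W_b: "(\<lambda>\<omega>. W \<omega> \<bullet> b) \<in> borel_measurable F" for b using W by measurable
  have int: "integrable M (\<lambda>\<omega>. (W \<omega> \<bullet> b) * (X \<omega> \<bullet> b))" if "b \<in> Basis" for b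
  proof (rule integrable_bounded_mult[where c=c])
    show "\<bar>W \<omega> \<bullet> b\<bar> \<le> c" if "\<omega> \<in> space M" for \<omega>
      using Basis_le_norm[OF \<open>b \<in> Basis\<close>, of "W \<omega>"] W_bound[OF that] by linarith
  qed (use X in auto)
  note cond = F.real_cond_exp_intg[OF int W_b borel_measurable_inner[OF borel_measurable_integrable[OF X]
        borel_measurable_const]]
  have V: "W \<omega> \<bullet> vcond_exp M F X \<omega> = (\<Sum>b\<in>Basis. (W \<omega> \<bullet> b) * real_cond_exp M F (\<lambda>\<omega>. X \<omega> \<bullet> b) \<omega>)" for \<omega>
    unfolding vcond_exp_def by (simp add: inner_sum_right mult.commute)
  show "integrable M (\<lambda>\<omega>. W \<omega> \<bullet> vcond_exp M F X \<omega>)" unfolding V using cond(1) by auto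
  have "(\<integral>\<omega>. W \<omega> \<bullet> vcond_exp M F X \<omega> \<partial>M) = (\<Sum>b\<in>Basis. \<integral>\<omega>. (W \<omega> \<bullet> b) * (X \<omega> \<bullet> b) \<partial>M)"
    unfolding V using cond by simp
  also have "\<dots> = (\<integral>\<omega>. W \<omega> \<bullet> X \<omega> \<partial>M)"
    using int by (subst euclidean_inner[of "W _"]) simp
  finally show "(\<integral>\<omega>. W \<omega> \<bullet> vcond_exp M F X \<omega> \<partial>M) = (\<integral>\<omega>. W \<omega> \<bullet> X \<omega> \<partial>M)" .
qed

lemma set_nn_integral_dist_vcond_exp_le:
  fixes X Y :: "'a \<Rightarrow> 'b::euclidean_space"
  assumes F: "subalgebra M F" and X: "integrable M X"
    and Y[measurable]: "Y \<in> borel_measurable F" and A[measurable]: "A \<in> sets F"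
    and bound: "\<And>\<omega>. \<omega> \<in> A \<Longrightarrow> norm (Y \<omega> - vcond_exp M F X \<omega>) \<le> c"
  shows "(\<integral>\<^sup>+\<omega>. ennreal (indicator A \<omega> * (norm (Y \<omega> - vcond_exp M F X \<omega>))^2) \<partial>M)
       \<le> (\<integral>\<^sup>+\<omega>. ennreal (indicator A \<omega> * (norm (Y \<omega> - X \<omega>))^2) \<partial>M)"
proof (cases "(\<integral>\<^sup>+\<omega>. ennreal (indicator A \<omega> * (norm (Y \<omega> - X \<omega>))^2) \<partial>M) = \<infinity>")
  case False
  define V where "V = vcond_exp M F X"
  define W where "W \<omega> = indicator A \<omega> *\<^sub>R (Y \<omega> - V \<omega>)" for \<omega>
  define u where "u \<omega> = indicator A \<omega> * (norm (Y \<omega> - V \<omega>))^2" for \<omega>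
  define v where "v \<omega> = indicator A \<omega> * (norm (Y \<omega> - X \<omega>))^2" for \<omega>
  have [measurable]: "W \<in> borel_measurable F" unfolding W_def V_def by measurable
  have [measurable]: "A \<in> sets M" "X \<in> borel_measurable M" "Y \<in> borel_measurable M"
    "V \<in> borel_measurable M"
    using A F X measurable_from_subalg[OF F Y] measurable_from_subalg[OF F borel_measurable_vcond_exp]
    by (auto simp: subalgebra_def V_def)
  have W_bound: "norm (W \<omega>) \<le> \<bar>c\<bar>" for \<omega>
    using bound[of \<omega>] unfolding W_def V_def by (auto simp: indicator_def intro: order_trans[OF _ abs_ge_self])
  have u_W: "u \<omega> = (norm (W \<omega>))^2" for \<omega> unfolding u_def W_def by (auto simp: indicator_def)
  have "norm (u \<omega>) \<le> c^2" for \<omega> using power_mono[OF W_bound[of \<omega>], of 2] by (simp add: u_W)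
  moreover have "u \<in> borel_measurable M" unfolding u_def by measurable
  ultimately have u_int: "integrable M u" by (intro integrable_const_bound AE_I2)
  have "v \<in> borel_measurable M" unfolding v_def by measurable
  then have v_int: "integrable M v"
    by (rule integrableI_nonneg) (use False in \<open>auto simp: v_def less_top\<close>)
  \<comment> \<open>u = W \<bullet> (Y - X) + W \<bullet> (X - V), and the second term has mean zero\<close>
  have WYX: "\<bar>W \<omega> \<bullet> (Y \<omega> - X \<omega>)\<bar> \<le> (u \<omega> + v \<omega>) / 2" for \<omega>
    using abs_inner_le_half_sum_squares[of "W \<omega>" "indicator A \<omega> *\<^sub>R (Y \<omega> - X \<omega>)"]
    unfolding W_def u_def v_def by (auto simp: indicator_def)
  have W_M[measurable]: "W \<in> borel_measurable M" by (rule measurable_from_subalg[OF F]) simp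
  have int_WV: "integrable M (\<lambda>\<omega>. W \<omega> \<bullet> V \<omega>)" and WV_WX: "(\<integral>\<omega>. W \<omega> \<bullet> V \<omega> \<partial>M) = (\<integral>\<omega>. W \<omega> \<bullet> X \<omega> \<partial>M)"
    unfolding V_def using integral_inner_vcond_exp[OF F X _ W_bound] by auto
  have int_WX: "integrable M (\<lambda>\<omega>. W \<omega> \<bullet> X \<omega>)" by (rule integrable_inner_bounded[OF X W_M W_bound])
  have u_eq: "u \<omega> = W \<omega> \<bullet> (Y \<omega> - X \<omega>) + (W \<omega> \<bullet> X \<omega> - W \<omega> \<bullet> V \<omega>)" for \<omega>
    unfolding u_def W_def by (simp add: power2_norm_eq_inner indicator_def inner_diff_right)
  have int_WYX: "integrable M (\<lambda>\<omega>. W \<omega> \<bullet> (Y \<omega> - X \<omega>))"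
    using Bochner_Integration.integrable_diff[OF u_int Bochner_Integration.integrable_diff[OF int_WX int_WV]]
    unfolding u_eq by simp
  have "integral\<^sup>L M u = (\<integral>\<omega>. W \<omega> \<bullet> (Y \<omega> - X \<omega>) + (W \<omega> \<bullet> X \<omega> - W \<omega> \<bullet> V \<omega>) \<partial>M)"
    using u_eq by (intro Bochner_Integration.integral_cong) auto
  also have "\<dots> = (\<integral>\<omega>. W \<omega> \<bullet> (Y \<omega> - X \<omega>) \<partial>M)"
    using int_WYX int_WX int_WV WV_WX by simp
  also have "\<dots> \<le> (\<integral>\<omega>. (u \<omega> + v \<omega>) / 2 \<partial>M)"
  proof (rule integral_mono[OF int_WYX])
    show "W \<omega> \<bullet> (Y \<omega> - X \<omega>) \<le> (u \<omega> + v \<omega>) / 2" for \<omega>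
      using WYX[of \<omega>] by linarith
  qed (use u_int v_int in simp)
  finally have "integral\<^sup>L M u \<le> integral\<^sup>L M v" using u_int v_int by simp
  then show ?thesis
    using nn_integral_eq_integral[OF u_int] nn_integral_eq_integral[OF v_int]
    by (simp add: u_def v_def V_def ennreal_leI)
qed simp

end

lemma AE_le_of_bounded_set_nn_integral_le:
  fixes u w :: "'a \<Rightarrow> real"
  assumes F: "subalgebra M F" and [measurable]: "u \<in> borel_measurable F" "w \<in> borel_measurable F"
    and w: "\<And>\<omega>. 0 \<le> w \<omega>" "(\<integral>\<^sup>+\<omega>. ennreal (w \<omega>) \<partial>M) < \<infinity>"
    and le: "\<And>A c. A \<in> sets F \<Longrightarrow> (\<And>\<omega>. \<omega> \<in> A \<Longrightarrow> u \<omega> \<le> c) \<Longrightarrow>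
       (\<integral>\<^sup>+\<omega>. ennreal (indicator A \<omega> * u \<omega>) \<partial>M) \<le> (\<integral>\<^sup>+\<omega>. ennreal (indicator A \<omega> * w \<omega>) \<partial>M)"
  shows "AE \<omega> in M. u \<omega> \<le> w \<omega>"
proof -
  define B where "B m = {\<omega> \<in> space F. w \<omega> + 1 / Suc m < u \<omega> \<and> u \<omega> \<le> m}" for m :: nat
  have [measurable]: "w \<in> borel_measurable M" by (rule measurable_from_subalg[OF F]) simp
  have B_F: "B m \<in> sets F" for m unfolding B_def by measurable
  then have B_M[measurable]: "B m \<in> sets M" for m using F by (auto simp: subalgebra_def)
  have "emeasure M (B m) = 0" for m
  proof -
    let ?I = "\<integral>\<^sup>+\<omega>. ennreal (indicator (B m) \<omega> * w \<omega>) \<partial>M"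
    have "?I \<le> (\<integral>\<^sup>+\<omega>. ennreal (w \<omega>) \<partial>M)"
      by (intro nn_integral_mono) (auto simp: indicator_def w(1))
    then have I_fin: "?I \<noteq> \<infinity>" using w(2) by (auto simp: top_unique)
    have "emeasure M (B m) * ennreal (1 / Suc m) = (\<integral>\<^sup>+\<omega>. ennreal (1 / Suc m) * indicator (B m) \<omega> \<partial>M)"
      by (subst nn_integral_cmult_indicator) (simp_all add: mult.commute)
    then have "?I + emeasure M (B m) * ennreal (1 / Suc m)
        = (\<integral>\<^sup>+\<omega>. ennreal (indicator (B m) \<omega> * w \<omega>) + ennreal (1 / Suc m) * indicator (B m) \<omega> \<partial>M)"
      by (simp add: nn_integral_add)
    also have "\<dots> \<le> (\<integral>\<^sup>+\<omega>. ennreal (indicator (B m) \<omega> * u \<omega>) \<partial>M)"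
    proof (intro nn_integral_mono)
      fix \<omega> show "ennreal (indicator (B m) \<omega> * w \<omega>) + ennreal (1 / Suc m) * indicator (B m) \<omega>
          \<le> ennreal (indicator (B m) \<omega> * u \<omega>)"
        using w(1)[of \<omega>]
        by (cases "\<omega> \<in> B m") (auto simp: B_def ennreal_plus[symmetric] simp del: ennreal_plus intro!: ennreal_leI)
    qed
    also have "\<dots> \<le> ?I" by (rule le[OF B_F]) (auto simp: B_def)
    finally have "?I + emeasure M (B m) * ennreal (1 / Suc m) \<le> ?I + 0" by simp
    then have "emeasure M (B m) * ennreal (1 / Suc m) = 0"
      using I_fin by (simp add: ennreal_add_left_cancel_le)
    then show ?thesis by simp
  qed
  then have "(\<Union>m. B m) \<in> null_sets M" by (intro null_sets_UN) (simp add: null_sets_def)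
  then show ?thesis
  proof (rule AE_I')
    show "{\<omega> \<in> space M. \<not> u \<omega> \<le> w \<omega>} \<subseteq> (\<Union>m. B m)"
    proof
      fix \<omega> assume "\<omega> \<in> {\<omega> \<in> space M. \<not> u \<omega> \<le> w \<omega>}"
      then have \<omega>: "\<omega> \<in> space M" "0 < u \<omega> - w \<omega>" by auto
      obtain m1 :: nat where m1: "1 / Suc m1 < u \<omega> - w \<omega>"
        using reals_Archimedean[OF \<omega>(2)] by (auto simp: inverse_eq_divide)
      obtain m2 :: nat where m2: "u \<omega> \<le> m2" using real_arch_simple by blast
      have "1 / real (Suc (max m1 m2)) \<le> 1 / Suc m1" by (simp add: frac_le)
      then have "\<omega> \<in> B (max m1 m2)"
        using \<omega> m1 m2 F unfolding B_def subalgebra_def by (auto simp: le_max_iff_disj)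
      then show "\<omega> \<in> (\<Union>m. B m)" by blast
    qed
  qed
qed

lemma nn_integral_mono_partition:
  fixes f g :: "'a \<Rightarrow> ennreal" and C :: "nat \<Rightarrow> 'a set"
  assumes [measurable]: "\<And>n. C n \<in> sets M" "f \<in> borel_measurable M" "g \<in> borel_measurable M"
    and disj: "disjoint_family C"
    and outside: "AE \<omega> in M. f \<omega> \<le> indicator (\<Union>n. C n) \<omega> * f \<omega>"
    and pieces: "\<And>n. (\<integral>\<^sup>+\<omega>. indicator (C n) \<omega> * f \<omega> \<partial>M) \<le> (\<integral>\<^sup>+\<omega>. indicator (C n) \<omega> * g \<omega> \<partial>M)"
  shows "integral\<^sup>N M f \<le> integral\<^sup>N M g"
proof -
  have split: "(\<integral>\<^sup>+\<omega>. indicator (\<Union>n. C n) \<omega> * u \<omega> \<partial>M) = (\<Sum>n. \<integral>\<^sup>+\<omega>. indicator (C n) \<omega> * u \<omega> \<partial>M)"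
    if [measurable]: "u \<in> borel_measurable M" for u :: "'a \<Rightarrow> ennreal"
    by (subst nn_integral_suminf[symmetric]) (simp_all add: suminf_indicator[OF disj, symmetric])
  have "integral\<^sup>N M f \<le> (\<integral>\<^sup>+\<omega>. indicator (\<Union>n. C n) \<omega> * f \<omega> \<partial>M)"
    by (rule nn_integral_mono_AE[OF outside])
  also have "\<dots> \<le> (\<integral>\<^sup>+\<omega>. indicator (\<Union>n. C n) \<omega> * g \<omega> \<partial>M)"
    unfolding split[of f, simplified] split[of g, simplified] by (intro suminf_le pieces) auto
  also have "\<dots> \<le> integral\<^sup>N M g"
    by (intro nn_integral_mono) (simp add: indicator_def)
  finally show ?thesis .
qed

lemma (in prob_space) nn_integral_vcond_exp_sq_le:
  fixes X :: "'a \<Rightarrow> 'b::euclidean_space"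
  assumes F: "subalgebra M F" and X: "integrable M X"
  shows "(\<integral>\<^sup>+\<omega>. ennreal ((norm (vcond_exp M F X \<omega>))^2) \<partial>M) \<le> (\<integral>\<^sup>+\<omega>. ennreal ((norm (X \<omega>))^2) \<partial>M)"
proof -
  define B where "B m = {\<omega> \<in> space F. norm (vcond_exp M F X \<omega>) \<le> real m}" for m :: nat
  have B_F: "B m \<in> sets F" for m unfolding B_def by measurable
  have [measurable]: "B m \<in> sets M" for m using B_F F by (auto simp: subalgebra_def)
  have [measurable]: "vcond_exp M F X \<in> borel_measurable M"
    by (rule measurable_from_subalg[OF F]) measurable
  define u where "u m \<omega> = ennreal (indicator (B m) \<omega> * (norm (vcond_exp M F X \<omega>))^2)" for m \<omega>
  have [measurable]: "u m \<in> borel_measurable M" for m unfolding u_def by measurable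
  have "incseq u"
    by (intro incseq_SucI le_funI) (auto simp: u_def B_def indicator_def intro: ennreal_leI)
  \<comment> \<open>on B m compare the conditional expectation with the constant 0\<close>
  have "integral\<^sup>N M (u m) \<le> (\<integral>\<^sup>+\<omega>. ennreal ((norm (X \<omega>))^2) \<partial>M)" for m
  proof -
    have "integral\<^sup>N M (u m) \<le> (\<integral>\<^sup>+\<omega>. ennreal (indicator (B m) \<omega> * (norm (0 - X \<omega>))^2) \<partial>M)"
      using set_nn_integral_dist_vcond_exp_le[OF F X _ B_F, where Y="\<lambda>_. 0" and c="real m"]
      unfolding u_def by (auto simp: B_def)
    also have "\<dots> \<le> (\<integral>\<^sup>+\<omega>. ennreal ((norm (X \<omega>))^2) \<partial>M)"
      by (intro nn_integral_mono) (auto simp: indicator_def intro: ennreal_leI)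
    finally show ?thesis .
  qed
  then have "(SUP m. integral\<^sup>N M (u m)) \<le> (\<integral>\<^sup>+\<omega>. ennreal ((norm (X \<omega>))^2) \<partial>M)"
    by (rule SUP_least)
  moreover have "(\<integral>\<^sup>+\<omega>. ennreal ((norm (vcond_exp M F X \<omega>))^2) \<partial>M) \<le> (\<integral>\<^sup>+\<omega>. (SUP m. u m \<omega>) \<partial>M)"
  proof (rule nn_integral_mono)
    fix \<omega> assume "\<omega> \<in> space M"
    moreover obtain m :: nat where "norm (vcond_exp M F X \<omega>) \<le> real m" using real_arch_simple by blast
    ultimately have "u m \<omega> = ennreal ((norm (vcond_exp M F X \<omega>))^2)"
      using F unfolding u_def B_def subalgebra_def by simp
    then show "ennreal ((norm (vcond_exp M F X \<omega>))^2) \<le> (SUP m. u m \<omega>)" by (metis SUP_upper UNIV_I)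
  qed
  moreover have "(\<integral>\<^sup>+\<omega>. (SUP m. u m \<omega>) \<partial>M) = (SUP m. integral\<^sup>N M (u m))"
    using \<open>incseq u\<close> by (rule nn_integral_monotone_convergence_SUP) (simp add: u_def)
  ultimately show ?thesis by simp
qed

lemma nn_integral_add_cmult_le:
  fixes u v w z :: "'a \<Rightarrow> real"
  assumes [measurable]: "u \<in> borel_measurable M" "v \<in> borel_measurable M"
    "w \<in> borel_measurable M" "z \<in> borel_measurable M"
    and nonneg: "\<And>\<omega>. \<omega> \<in> space M \<Longrightarrow> 0 \<le> u \<omega> \<and> 0 \<le> v \<omega> \<and> 0 \<le> w \<omega> \<and> 0 \<le> z \<omega>"
    and ab: "0 \<le> a" "0 \<le> b"
    and le: "\<And>\<omega>. \<omega> \<in> space M \<Longrightarrow> u \<omega> + a * v \<omega> \<le> w \<omega> + b * z \<omega>"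
  shows "(\<integral>\<^sup>+\<omega>. ennreal (u \<omega>) \<partial>M) + ennreal a * (\<integral>\<^sup>+\<omega>. ennreal (v \<omega>) \<partial>M)
    \<le> (\<integral>\<^sup>+\<omega>. ennreal (w \<omega>) \<partial>M) + ennreal b * (\<integral>\<^sup>+\<omega>. ennreal (z \<omega>) \<partial>M)"
proof -
  have lin: "(\<integral>\<^sup>+\<omega>. ennreal (s \<omega> + c * t \<omega>) \<partial>M)
      = (\<integral>\<^sup>+\<omega>. ennreal (s \<omega>) \<partial>M) + ennreal c * (\<integral>\<^sup>+\<omega>. ennreal (t \<omega>) \<partial>M)"
    if [measurable]: "s \<in> borel_measurable M" "t \<in> borel_measurable M"
      and st: "\<And>\<omega>. \<omega> \<in> space M \<Longrightarrow> 0 \<le> s \<omega> \<and> 0 \<le> t \<omega>" and "0 \<le> c" for s t c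
  proof -
    have "(\<integral>\<^sup>+\<omega>. ennreal (s \<omega> + c * t \<omega>) \<partial>M) = (\<integral>\<^sup>+\<omega>. ennreal (s \<omega>) + ennreal c * ennreal (t \<omega>) \<partial>M)"
      using st \<open>0 \<le> c\<close> by (intro nn_integral_cong) (simp add: ennreal_plus ennreal_mult)
    also have "\<dots> = (\<integral>\<^sup>+\<omega>. ennreal (s \<omega>) \<partial>M) + ennreal c * (\<integral>\<^sup>+\<omega>. ennreal (t \<omega>) \<partial>M)"
      by (simp add: nn_integral_add nn_integral_cmult)
    finally show ?thesis .
  qed
  have "(\<integral>\<^sup>+\<omega>. ennreal (u \<omega> + a * v \<omega>) \<partial>M) \<le> (\<integral>\<^sup>+\<omega>. ennreal (w \<omega> + b * z \<omega>) \<partial>M)"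
    using le by (intro nn_integral_mono ennreal_leI)
  then show ?thesis using nonneg ab by (simp add: lin)
qed

lemma ennreal_add_mult: "0 \<le> a \<Longrightarrow> 0 \<le> b \<Longrightarrow> 0 \<le> c \<Longrightarrow> ennreal (a + b * c) = ennreal a + ennreal b * ennreal c"
  by (simp add: ennreal_mult)

lemma sum_lessThan_Least_le:
  fixes n :: "nat \<Rightarrow> real"
  assumes "stop k0" "k0 \<le> K" "0 \<le> c" "\<And>k. \<not> stop k \<Longrightarrow> n k \<le> c"
  shows "(\<Sum>k<(LEAST k. stop k). n k) \<le> real K * c"
proof -
  have "(\<Sum>k<(LEAST k. stop k). n k) \<le> (\<Sum>k<(LEAST k. stop k). c)"
    using assms(4) not_less_Least by (intro sum_mono) blast
  also have "\<dots> \<le> real K * c"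
    using Least_le[of stop, OF assms(1)] assms(2,3) by (simp add: mult_right_mono)
  finally show ?thesis .
qed

lemma summable_inverse_powr_sq:
  assumes "\<nu> > 0"
  shows "summable (\<lambda>k. (1 / (real k + 1) powr (1 + \<nu>))^2)"
proof -
  have "1 / (real k + 1) powr (1 + \<nu>) = real (Suc k) powr (-(1 + \<nu>))" for k
    by (subst powr_minus) (simp add: divide_inverse add.commute)
  then have "(1 / (real k + 1) powr (1 + \<nu>))^2 = real (Suc k) powr (-(1 + \<nu>)) * real (Suc k) powr (-(1 + \<nu>))" for k
    by (simp add: power2_eq_square)
  also have "\<dots> k = real (Suc k) powr (-(2 + 2 * \<nu>))" for k
    by (simp add: powr_add[symmetric])
  moreover have "summable (\<lambda>k. real (Suc k) powr (-(2 + 2 * \<nu>)))"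
    using assms by (subst summable_Suc_iff) (simp add: summable_real_powr_iff)
  ultimately show ?thesis by simp
qed

lemma complexity_bound_weaken:
  fixes S :: "real \<Rightarrow> 'w \<Rightarrow> nat \<Rightarrow> bool" and n :: "nat \<Rightarrow> 'w \<Rightarrow> real"
  assumes bound: "\<exists>C\<ge>0. \<forall>\<epsilon>. 0 < \<epsilon> \<and> \<epsilon> < 1 \<longrightarrow> (AE \<omega> in M. let stop = S \<epsilon> \<omega> in
      (\<exists>k. stop k) \<and> (\<Sum>k<(LEAST k. stop k). n k \<omega>) \<le> C * \<epsilon> powr (-2))"
    and e: "2 \<le> e"
  shows "\<exists>C \<epsilon>0. \<epsilon>0 > 0 \<and> (\<forall>\<epsilon>. 0 < \<epsilon> \<and> \<epsilon> < \<epsilon>0 \<longrightarrow> (AE \<omega> in M. let stop = S \<epsilon> \<omega> in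
      (\<exists>k. stop k) \<and> (\<Sum>k<(LEAST k. stop k). n k \<omega>) \<le> C * \<epsilon> powr (-e)))"
proof -
  obtain C where C: "C \<ge> 0" and CC: "\<And>\<epsilon>. 0 < \<epsilon> \<Longrightarrow> \<epsilon> < 1 \<Longrightarrow> AE \<omega> in M. let stop = S \<epsilon> \<omega> in
      (\<exists>k. stop k) \<and> (\<Sum>k<(LEAST k. stop k). n k \<omega>) \<le> C * \<epsilon> powr (-2)"
    using bound by blast
  have le: "C * \<epsilon> powr (-2) \<le> C * \<epsilon> powr (-e)" if "0 < \<epsilon>" "\<epsilon> < 1" for \<epsilon> :: real
    using that e C by (intro mult_left_mono powr_mono') auto
  have "AE \<omega> in M. let stop = S \<epsilon> \<omega> in
      (\<exists>k. stop k) \<and> (\<Sum>k<(LEAST k. stop k). n k \<omega>) \<le> C * \<epsilon> powr (-e)" if "0 < \<epsilon>" "\<epsilon> < 1" for \<epsilon>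
    using CC[OF that] unfolding Let_def by (rule eventually_mono) (meson le that order_trans)
  then show ?thesis by (intro exI[of _ C] exI[of _ 1]) auto
qed

section \<open>The stochastic proximal gradient method\<close>

(* The hypotheses of the theorem that the argument uses. *)

locale stochastic_prox_grad =
  fixes f :: "'a::euclidean_space \<Rightarrow> real" and gradf :: "'a \<Rightarrow> 'a"
    and h :: "'a \<Rightarrow> ereal" and L :: real
    and P :: "'b measure" and F :: "'a \<Rightarrow> 'b \<Rightarrow> real" and gradF :: "'a \<Rightarrow> 'b \<Rightarrow> 'a"
    and M :: "'w measure"
    and x :: "nat \<Rightarrow> 'w \<Rightarrow> 'a" and g :: "nat \<Rightarrow> 'w \<Rightarrow> 'a"
    and \<xi> :: "nat \<Rightarrow> nat \<Rightarrow> 'w \<Rightarrow> 'b" and N :: "nat \<Rightarrow> 'w \<Rightarrow> nat"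
    and G :: "nat \<Rightarrow> 'w measure"
    and x0 :: 'a and \<alpha> \<sigma> \<eta> \<iota>0 :: real and \<delta> :: "nat \<Rightarrow> real"
  assumes G_def: "G = (\<lambda>k. gen_sigma M (insert (x 0) (g ` {..<k})))"
    and L_pos: "L > 0"
    and f_grad: "\<And>z. (f has_derivative (\<lambda>v. gradf z \<bullet> v)) (at z)"
    and gradf_lip: "\<And>z w. norm (gradf z - gradf w) \<le> L * norm (z - w)"
    and h_closed: "closed_fun h" and h_convex: "convex_fun h" and h_proper: "proper_fun h"
    and phi_bdd: "\<exists>m::real. \<forall>z. ereal m \<le> ereal (f z) + h z"
    and P_prob: "prob_space P"
    and F_int: "\<And>z. integrable P (F z)"
    and F_grad: "\<And>z s. s \<in> space P \<Longrightarrow> ((\<lambda>u. F u s) has_derivative (\<lambda>v. gradF z s \<bullet> v)) (at z)"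
    and gradF_int: "\<And>z. integrable P (gradF z)"
    and gradf_exp: "\<And>z. gradf z = (\<integral>s. gradF z s \<partial>P)"
    and M_prob: "prob_space M"
    and g_meas[measurable]: "\<And>k. g k \<in> borel_measurable M"
    and x_meas[measurable]: "\<And>k. x k \<in> borel_measurable M"
    and \<xi>_meas: "\<And>k i. \<xi> k i \<in> measurable M P"
    and \<xi>_distr: "\<And>k i. distr M P (\<xi> k i) = P"
    and \<xi>_indep: "\<And>k. prob_space.indep_sets M
        (\<lambda>j. case j of None \<Rightarrow> sets (G k)
                     | Some i \<Rightarrow> {\<xi> k i -` A \<inter> space M | A. A \<in> sets P}) UNIV"
    and variance_bound: "\<And>k i. AE \<omega> in M. nn_cond_exp M (G k)
        (\<lambda>\<omega>'. ennreal ((norm (gradF (x k \<omega>') (\<xi> k i \<omega>') - gradf (x k \<omega>'))) ^ 2)) \<omega>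
        \<le> ennreal (\<sigma> ^ 2)"
    and eta: "0 < \<eta>" "\<eta> < 1"
    and alpha: "\<alpha> > 0" "\<alpha> \<le> (1 - \<eta>) / (2 * L)"
    and x_init: "\<And>\<omega>. \<omega> \<in> space M \<Longrightarrow> x 0 \<omega> = x0"
    and x_step: "\<And>k \<omega>. \<omega> \<in> space M \<Longrightarrow> x (Suc k) \<omega> = prox \<alpha> h (x k \<omega> - \<alpha> *\<^sub>R g k \<omega>)"
    and R_int: "\<And>k. integrable M (\<lambda>\<omega>. (1 / \<alpha>) *\<^sub>R (x k \<omega> - x (Suc k) \<omega>))"
    and sample_rule: "\<And>k. AE \<omega> in M.
        (let D = \<eta>^2 / 4 * (norm (vcond_exp M (G k) (\<lambda>\<omega>'. (1 / \<alpha>) *\<^sub>R (x k \<omega>' - x (Suc k) \<omega>')) \<omega>))^2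
                 + \<iota>0^2 * (\<delta> k)^2
         in (D > 0 \<longrightarrow> N k \<omega> = max 1 (nat \<lceil>\<sigma>^2 / D\<rceil>)
                       \<and> g k \<omega> = (1 / real (N k \<omega>)) *\<^sub>R (\<Sum>i<N k \<omega>. gradF (x k \<omega>) (\<xi> k i \<omega>)))
          \<and> (D = 0 \<longrightarrow> g k \<omega> = gradf (x k \<omega>)))"

sublocale stochastic_prox_grad \<subseteq> M: prob_space M by (rule M_prob)

sublocale stochastic_prox_grad \<subseteq> P: prob_space P by (rule P_prob)

context stochastic_prox_grad
begin

lemma alpha_L: "\<alpha> * L \<le> (1 - \<eta>) / 2"
  using alpha L_pos by (simp add: field_simps)

definition phi_low :: real where "phi_low = (SOME m. \<forall>z. ereal m \<le> ereal (f z) + h z)"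

lemma phi_low_le: "ereal phi_low \<le> ereal (f z) + h z"
  using someI_ex[OF phi_bdd] unfolding phi_low_def by blast

lemma h_ninf: "h z \<noteq> -\<infinity>"
  using h_proper unfolding proper_fun_def by auto

lemma descent: "f z \<le> f w + gradf w \<bullet> (z - w) + L * (norm (z - w))^2"
  by (rule descent_lemma[OF f_grad gradf_lip]) (use L_pos in simp)

definition proxh :: "'a \<Rightarrow> 'a" where "proxh y = prox \<alpha> h y"

lemma is_prox_point_proxh: "is_prox_point \<alpha> h y (proxh y)"
  unfolding proxh_def
proof (rule is_prox_point_prox, rule prox_minimizer_exists[OF h_proper h_closed alpha(1)])
  \<comment> \<open>phi is bounded below and f grows at most quadratically, so h has a quadratic minorant\<close>
  show "ereal (phi_low - f y - norm (gradf y) * norm (z - y) - L * (norm (z - y))^2) \<le> h z" for z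
  proof -
    have "phi_low - f y - norm (gradf y) * norm (z - y) - L * (norm (z - y))^2 \<le> phi_low - f z"
      using descent[of z y] norm_cauchy_schwarz[of "gradf y" "z - y"] by linarith
    also have "ereal (phi_low - f z) \<le> h z"
      using phi_low_le[of z] h_ninf[of z] by (cases "h z") auto
    finally show ?thesis by simp
  qed
  show "L < 1 / (2 * \<alpha>)" using alpha_L alpha eta by (simp add: field_simps)
qed simp

lemma h_proxh_finite: "h (proxh y) \<noteq> \<infinity>"
proof -
  obtain w where "h w \<noteq> \<infinity>" using h_proper unfolding proper_fun_def by auto
  then show ?thesis
    using is_prox_point_variational(1)[OF h_convex h_proper alpha(1) is_prox_point_proxh] by blast
qed

lemma proxh_variational: "h w \<noteq> \<infinity> \<Longrightarrow> h (proxh y) + ereal (((y - proxh y) \<bullet> (w - proxh y)) / \<alpha>) \<le> h w"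
  by (rule is_prox_point_variational(2)[OF h_convex h_proper alpha(1) is_prox_point_proxh])

lemma proxh_nonexpansive: "norm (proxh y1 - proxh y2) \<le> norm (y1 - y2)"
  by (rule is_prox_point_nonexpansive[OF h_convex h_proper alpha(1) is_prox_point_proxh
        is_prox_point_proxh h_proxh_finite h_proxh_finite])

lemma borel_measurable_proxh[measurable]: "proxh \<in> borel_measurable borel"
  by (intro borel_measurable_continuous_onI lipschitz_on_continuous_on[where L=1])
    (simp add: lipschitz_on_def dist_norm proxh_nonexpansive)

lemma borel_measurable_h[measurable]: "h \<in> borel_measurable borel"
  by (rule borel_measurable_closed_fun[OF h_closed h_proper])

definition h_real :: "'a \<Rightarrow> real" where "h_real z = real_of_ereal (h z)"

lemma borel_measurable_h_real[measurable]: "h_real \<in> borel_measurable borel"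
  unfolding h_real_def by measurable

lemma h_eq_h_real: "h z \<noteq> \<infinity> \<Longrightarrow> h z = ereal (h_real z)"
  unfolding h_real_def using h_ninf[of z] by (cases "h z") auto

lemma phi_low_le_real: "h z \<noteq> \<infinity> \<Longrightarrow> phi_low \<le> f z + h_real z"
  using phi_low_le[of z] h_eq_h_real[of z] by simp

lemma borel_measurable_f[measurable]: "f \<in> borel_measurable borel"
  using f_grad by (intro borel_measurable_continuous_onI)
    (meson continuous_at_imp_continuous_on has_derivative_continuous)

lemma borel_measurable_gradf[measurable]: "gradf \<in> borel_measurable borel"
  by (intro borel_measurable_continuous_onI lipschitz_on_continuous_on[where L=L])
    (simp add: lipschitz_on_def dist_norm gradf_lip L_pos less_imp_le)

lemma prox_grad_step_le:
  fixes z v :: 'a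
  assumes hz: "h z \<noteq> \<infinity>"
  defines "p \<equiv> proxh (z - \<alpha> *\<^sub>R v)"
  shows "f p + h_real p + (1 / \<alpha> - L) * (norm (z - p))^2 \<le> f z + h_real z + norm (gradf z - v) * norm (z - p)"
proof -
  define d where "d = z - p"
  have "h_real p + ((z - \<alpha> *\<^sub>R v - p) \<bullet> (z - p)) / \<alpha> \<le> h_real z"
    using proxh_variational[OF hz] h_eq_h_real[OF hz] h_eq_h_real[OF h_proxh_finite] unfolding p_def by simp
  moreover have "(z - \<alpha> *\<^sub>R v - p) \<bullet> (z - p) = (norm d)^2 - \<alpha> * (v \<bullet> d)"
    unfolding d_def by (simp add: power2_norm_eq_inner inner_diff_left inner_diff_right algebra_simps)
  then have "((z - \<alpha> *\<^sub>R v - p) \<bullet> (z - p)) / \<alpha> = (norm d)^2 / \<alpha> - v \<bullet> d"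
    using alpha(1) by (simp add: diff_divide_distrib)
  moreover have "f p \<le> f z - gradf z \<bullet> d + L * (norm d)^2"
    using descent[of p z] unfolding d_def by (simp add: inner_diff_right norm_minus_commute)
  moreover have "- ((gradf z - v) \<bullet> d) \<le> norm (gradf z - v) * norm d"
    using norm_cauchy_schwarz[of "v - gradf z" d] by (simp add: norm_minus_commute inner_diff_left)
  ultimately show ?thesis
    unfolding d_def[symmetric] by (simp add: algebra_simps inner_diff_left)
qed

(* res k, res_true k and res_cond k are the paper's R_alpha(y_k), R^true_alpha(x_k) and
   E_k[R_alpha(y_k)]. *)

definition res :: "nat \<Rightarrow> 'w \<Rightarrow> 'a" where
  "res k \<omega> = (1 / \<alpha>) *\<^sub>R (x k \<omega> - x (Suc k) \<omega>)"

definition res_true :: "nat \<Rightarrow> 'w \<Rightarrow> 'a" where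
  "res_true k \<omega> = (1 / \<alpha>) *\<^sub>R (x k \<omega> - proxh (x k \<omega> - \<alpha> *\<^sub>R gradf (x k \<omega>)))"

definition grad_err :: "nat \<Rightarrow> 'w \<Rightarrow> 'a" where
  "grad_err k \<omega> = gradf (x k \<omega>) - g k \<omega>"

definition res_cond :: "nat \<Rightarrow> 'w \<Rightarrow> 'a" where
  "res_cond k = vcond_exp M (G k) (res k)"

definition threshold :: "nat \<Rightarrow> 'w \<Rightarrow> real" where
  "threshold k \<omega> = \<eta>^2 / 4 * (norm (res_cond k \<omega>))^2 + \<iota>0^2 * (\<delta> k)^2"

(* batch k is the sample size |S_k| of the rule when threshold k > 0, and batch_var k bounds the
   resulting conditional variance of g_k. *)

definition batch :: "nat \<Rightarrow> 'w \<Rightarrow> nat" where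
  "batch k \<omega> = max 1 (nat \<lceil>\<sigma>^2 / threshold k \<omega>\<rceil>)"

definition batch_var :: "nat \<Rightarrow> 'w \<Rightarrow> real" where
  "batch_var k \<omega> = (if threshold k \<omega> > 0 then \<sigma>^2 / real (batch k \<omega>) else 0)"

lemma subalgebra_G: "subalgebra M (G k)"
  unfolding G_def by (rule subalgebra_gen_sigma) auto

lemma space_G[simp]: "space (G k) = space M"
  unfolding G_def by simp

lemma sets_G_subset: "sets (G k) \<subseteq> sets M"
  using subalgebra_G[of k] unfolding subalgebra_def by auto

lemma subalgebra_G_G: "k \<le> l \<Longrightarrow> subalgebra (G l) (G k)"
  unfolding subalgebra_def G_def by (auto intro!: sets_gen_sigma_mono)

lemma x_measurable_G[measurable]: "x k \<in> borel_measurable (G k)"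
proof (induction k)
  case 0
  show ?case unfolding G_def by (rule measurable_gen_sigma) auto
next
  case (Suc k)
  have [measurable]: "x k \<in> borel_measurable (G (Suc k))"
    by (rule measurable_from_subalg[OF subalgebra_G_G Suc]) simp
  have [measurable]: "g k \<in> borel_measurable (G (Suc k))"
    unfolding G_def by (rule measurable_gen_sigma) auto
  have "(\<lambda>\<omega>. proxh (x k \<omega> - \<alpha> *\<^sub>R g k \<omega>)) \<in> borel_measurable (G (Suc k))" by measurable
  then show ?case by (rule measurable_cong[THEN iffD1, rotated]) (simp add: x_step proxh_def)
qed

lemma measurable_from_G: "X \<in> borel_measurable (G k) \<Longrightarrow> X \<in> borel_measurable M"
  by (rule measurable_from_subalg[OF subalgebra_G])

lemma res_measurable[measurable]: "res k \<in> borel_measurable M"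
  unfolding res_def by measurable

lemma res_true_measurable_G[measurable]: "res_true k \<in> borel_measurable (G k)"
  unfolding res_true_def by measurable

lemma grad_err_measurable[measurable]: "grad_err k \<in> borel_measurable M"
  unfolding grad_err_def by measurable

lemma threshold_measurable_G[measurable]: "threshold k \<in> borel_measurable (G k)"
  unfolding threshold_def res_cond_def by measurable

lemma batch_measurable_G[measurable]: "batch k \<in> measurable (G k) (count_space UNIV)"
  unfolding batch_def by measurable

lemma batch_var_measurable_G[measurable]: "batch_var k \<in> borel_measurable (G k)"
  unfolding batch_var_def by measurable

lemma res_cond_measurable_G[measurable]: "res_cond k \<in> borel_measurable (G k)"
  unfolding res_cond_def by measurable

lemma res_cond_measurable[measurable]: "res_cond k \<in> borel_measurable M"
  by (rule measurable_from_G) measurable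

lemma res_true_measurable[measurable]: "res_true k \<in> borel_measurable M"
  by (rule measurable_from_G) measurable

lemma batch_var_measurable[measurable]: "batch_var k \<in> borel_measurable M"
  by (rule measurable_from_G) measurable

lemma res_integrable: "integrable M (res k)"
  using R_int[of k] by (simp add: res_def[abs_def])

lemma threshold_nonneg: "threshold k \<omega> \<ge> 0"
  unfolding threshold_def by simp

lemma batch_ge_1: "batch k \<omega> \<ge> 1"
  unfolding batch_def by simp

lemma batch_var_nonneg: "batch_var k \<omega> \<ge> 0"
  unfolding batch_var_def by simp

lemma batch_var_le_sigma: "batch_var k \<omega> \<le> \<sigma>^2"
  using batch_ge_1[of k \<omega>] unfolding batch_var_def by (simp add: divide_le_eq mult_le_cancel_left1)

lemma batch_var_le_threshold: "batch_var k \<omega> \<le> threshold k \<omega>"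
proof (cases "threshold k \<omega> > 0")
  case True
  have "\<sigma>^2 / threshold k \<omega> \<le> real (nat \<lceil>\<sigma>^2 / threshold k \<omega>\<rceil>)" by (rule real_nat_ceiling_ge)
  also have "\<dots> \<le> real (batch k \<omega>)" unfolding batch_def by simp
  finally
  have "\<sigma>^2 \<le> real (batch k \<omega>) * threshold k \<omega>" using True by (simp add: divide_le_eq)
  then show ?thesis
    using True batch_ge_1[of k \<omega>] unfolding batch_var_def by (simp add: divide_le_eq mult.commute)
qed (simp add: batch_var_def threshold_nonneg)

lemma batch_le:
  assumes "threshold k \<omega> > 0"
  shows "real (batch k \<omega>) \<le> 1 + \<sigma>^2 / threshold k \<omega>"
proof -
  have "real (nat \<lceil>\<sigma>^2 / threshold k \<omega>\<rceil>) = of_int \<lceil>\<sigma>^2 / threshold k \<omega>\<rceil>"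
    using assms by simp
  also have "\<dots> \<le> \<sigma>^2 / threshold k \<omega> + 1" by (rule of_int_ceiling_le_add_one)
  finally have "real (nat \<lceil>\<sigma>^2 / threshold k \<omega>\<rceil>) \<le> 1 + \<sigma>^2 / threshold k \<omega>" by simp
  then show ?thesis unfolding batch_def using assms by (simp add: max_def)
qed

lemma h_x_Suc_finite: "\<omega> \<in> space M \<Longrightarrow> h (x (Suc k) \<omega>) \<noteq> \<infinity>"
  using x_step h_proxh_finite unfolding proxh_def by simp

lemma norm_res_true_res_le: "\<omega> \<in> space M \<Longrightarrow> norm (res_true k \<omega> - res k \<omega>) \<le> norm (grad_err k \<omega>)"
proof -
  assume \<omega>: "\<omega> \<in> space M"
  have "res_true k \<omega> - res k \<omega>
      = (1 / \<alpha>) *\<^sub>R (proxh (x k \<omega> - \<alpha> *\<^sub>R g k \<omega>) - proxh (x k \<omega> - \<alpha> *\<^sub>R gradf (x k \<omega>)))"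
    unfolding res_true_def res_def x_step[OF \<omega>] proxh_def by (simp add: algebra_simps)
  moreover have "norm (proxh (x k \<omega> - \<alpha> *\<^sub>R g k \<omega>) - proxh (x k \<omega> - \<alpha> *\<^sub>R gradf (x k \<omega>)))
      \<le> norm (\<alpha> *\<^sub>R grad_err k \<omega>)"
    using proxh_nonexpansive[of "x k \<omega> - \<alpha> *\<^sub>R g k \<omega>" "x k \<omega> - \<alpha> *\<^sub>R gradf (x k \<omega>)"]
    unfolding grad_err_def by (simp add: algebra_simps)
  ultimately show ?thesis using alpha(1) by (simp add: divide_simps mult.commute)
qed

lemma borel_measurable_gradF_pair[measurable]:
  "(\<lambda>p. gradF (fst p) (snd p)) \<in> borel_measurable (borel \<Otimes>\<^sub>M P)"
  by (rule borel_measurable_param_gradient[OF F_grad]) (use F_int in auto)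

lemma measurable_gradF_comp:
  assumes "Y \<in> borel_measurable K" "Xi \<in> measurable K P"
  shows "(\<lambda>\<omega>. gradF (Y \<omega>) (Xi \<omega>)) \<in> borel_measurable K"
  using measurable_compose[OF measurable_Pair[OF assms] borel_measurable_gradF_pair] by simp

definition noise :: "nat \<Rightarrow> nat \<Rightarrow> 'w \<Rightarrow> 'a" where
  "noise k i \<omega> = gradF (x k \<omega>) (\<xi> k i \<omega>) - gradf (x k \<omega>)"

lemma noise_measurable[measurable]: "noise k i \<in> borel_measurable M"
  using measurable_gradF_comp[OF x_meas \<xi>_meas] unfolding noise_def by measurable

lemma set_nn_integral_noise_sq_le:
  assumes B: "B \<in> sets (G k)"
  shows "(\<integral>\<^sup>+\<omega>. ennreal (indicator B \<omega> * (norm (noise k i \<omega>))^2) \<partial>M) \<le> ennreal (\<sigma>^2 * measure M B)"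
proof -
  interpret G: sigma_finite_subalgebra M "G k"
    by (rule finite_measure_subalgebra_is_sigma_finite)
      (simp add: finite_measure_subalgebra_def finite_measure_subalgebra_axioms_def
        M.finite_measure_axioms subalgebra_G)
  have [measurable]: "B \<in> sets M" using B sets_G_subset[of k] by auto
  have "(\<integral>\<^sup>+\<omega>. ennreal (indicator B \<omega> * (norm (noise k i \<omega>))^2) \<partial>M)
      = (\<integral>\<^sup>+\<omega>. indicator B \<omega> * ennreal ((norm (noise k i \<omega>))^2) \<partial>M)"
    by (intro nn_integral_cong) (simp add: indicator_def)
  also have "\<dots> = (\<integral>\<^sup>+\<omega>. indicator B \<omega> * nn_cond_exp M (G k) (\<lambda>\<omega>. ennreal ((norm (noise k i \<omega>))^2)) \<omega> \<partial>M)"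
  proof (rule G.nn_cond_exp_intg[symmetric])
    show "(\<lambda>\<omega>. indicator B \<omega> :: ennreal) \<in> borel_measurable (G k)" using B by measurable
  qed measurable
  also have "\<dots> \<le> (\<integral>\<^sup>+\<omega>. ennreal (\<sigma>^2) * indicator B \<omega> \<partial>M)"
    using variance_bound[of k i] unfolding noise_def[abs_def]
    by (intro nn_integral_mono_AE) (auto elim!: eventually_mono simp: indicator_def)
  also have "\<dots> = ennreal (\<sigma>^2) * emeasure M B" by (rule nn_integral_cmult_indicator) simp
  also have "\<dots> = ennreal (\<sigma>^2 * measure M B)" by (simp add: M.emeasure_eq_measure ennreal_mult)
  finally show ?thesis .
qed

lemma set_integral_noise_sq:
  assumes B: "B \<in> sets (G k)"
  shows "integrable M (\<lambda>\<omega>. indicator B \<omega> * (norm (noise k i \<omega>))^2)"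
    "(\<integral>\<omega>. indicator B \<omega> * (norm (noise k i \<omega>))^2 \<partial>M) \<le> \<sigma>^2 * measure M B"
proof -
  have [measurable]: "B \<in> sets M" using B sets_G_subset[of k] by auto
  show int: "integrable M (\<lambda>\<omega>. indicator B \<omega> * (norm (noise k i \<omega>))^2)"
  proof (rule integrableI_nonneg)
    show "(\<integral>\<^sup>+\<omega>. ennreal (indicator B \<omega> * (norm (noise k i \<omega>))^2) \<partial>M) < \<infinity>"
      using set_nn_integral_noise_sq_le[OF B, of i] by (rule le_less_trans) simp
  qed auto
  have "ennreal (\<integral>\<omega>. indicator B \<omega> * (norm (noise k i \<omega>))^2 \<partial>M) \<le> ennreal (\<sigma>^2 * measure M B)"
    using set_nn_integral_noise_sq_le[OF B, of i] nn_integral_eq_integral[OF int] by simp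
  then show "(\<integral>\<omega>. indicator B \<omega> * (norm (noise k i \<omega>))^2 \<partial>M) \<le> \<sigma>^2 * measure M B"
    by (simp add: ennreal_le_iff)
qed

lemma integrable_indicator_noise_inner:
  assumes B: "B \<in> sets (G k)"
  shows "integrable M (\<lambda>\<omega>. indicator B \<omega> * (noise k i \<omega> \<bullet> noise k j \<omega>))"
proof (rule Bochner_Integration.integrable_bound[where
      f="\<lambda>\<omega>. (indicator B \<omega> * (norm (noise k i \<omega>))^2 + indicator B \<omega> * (norm (noise k j \<omega>))^2) / 2"])
  have [measurable]: "B \<in> sets M" using B sets_G_subset[of k] by auto
  show "(\<lambda>\<omega>. indicator B \<omega> * (noise k i \<omega> \<bullet> noise k j \<omega>)) \<in> borel_measurable M" by measurable
  show "AE \<omega> in M. norm (indicator B \<omega> * (noise k i \<omega> \<bullet> noise k j \<omega>))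
      \<le> norm ((indicator B \<omega> * (norm (noise k i \<omega>))^2 + indicator B \<omega> * (norm (noise k j \<omega>))^2) / 2)"
    using abs_inner_le_half_sum_squares[of "noise k i _" "noise k j _"]
    by (intro AE_I2) (auto simp: indicator_def)
qed (use set_integral_noise_sq(1)[OF B, of i] set_integral_noise_sq(1)[OF B, of j] in auto)

definition past_and_sample :: "nat \<Rightarrow> nat \<Rightarrow> 'w measure" where
  "past_and_sample k j = sigma (space M) (sets (G k) \<union> {\<xi> k j -` A \<inter> space M | A. A \<in> sets P})"

lemma sets_past_and_sample:
  "sets (past_and_sample k j) = sigma_sets (space M) (sets (G k) \<union> {\<xi> k j -` A \<inter> space M | A. A \<in> sets P})"
  unfolding past_and_sample_def using sets.sets_into_space[of _ "G k"]
  by (intro sets_measure_of) auto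

lemma space_past_and_sample[simp]: "space (past_and_sample k j) = space M"
  unfolding past_and_sample_def by (simp add: space_measure_of_conv)

lemma subalgebra_past_and_sample: "subalgebra M (past_and_sample k j)"
proof -
  have "sets (G k) \<union> {\<xi> k j -` A \<inter> space M | A. A \<in> sets P} \<subseteq> sets M"
    using sets_G_subset[of k] \<xi>_meas[of k j] by (auto simp: measurable_def)
  then show ?thesis
    unfolding subalgebra_def sets_past_and_sample by (simp add: sets.sigma_sets_subset)
qed

lemma subalgebra_past_and_sample_G: "subalgebra (past_and_sample k j) (G k)"
  unfolding subalgebra_def sets_past_and_sample by (auto intro: sigma_sets.Basic)

lemma \<xi>_measurable_past_and_sample: "\<xi> k j \<in> measurable (past_and_sample k j) P"
  using \<xi>_meas[of k j] unfolding sets_past_and_sample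
  by (intro measurableI) (auto simp: measurable_def sets_past_and_sample intro: sigma_sets.Basic)

lemma indep_sample_past_and_sample:
  assumes ij: "i \<noteq> j" and A: "A \<in> sets (past_and_sample k j)" and B: "B \<in> sets P"
  shows "measure M (A \<inter> (\<xi> k i -` B \<inter> space M)) = measure M A * measure M (\<xi> k i -` B \<inter> space M)"
proof -
  define E where "E oi = (case oi of None \<Rightarrow> sets (G k) | Some l \<Rightarrow> {\<xi> k l -` A \<inter> space M | A. A \<in> sets P})" for oi
  define I where "I b = (if b then {None, Some j} else {Some i})" for b :: bool
  have stable: "Int_stable (E oi)" for oi
  proof (cases oi)
    case (Some l)
    show ?thesis unfolding E_def Some Int_stable_def
    proof clarsimp
      fix A B assume "A \<in> sets P" "B \<in> sets P"
      then show "\<exists>C. \<xi> k l -` A \<inter> space M \<inter> (\<xi> k l -` B \<inter> space M) = \<xi> k l -` C \<inter> space M \<and> C \<in> sets P"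
        by (intro exI[of _ "A \<inter> B"]) auto
    qed
  qed (auto simp: E_def Int_stable_def)
  \<comment> \<open>group the independent family into {past, sample j} and {sample i}\<close>
  have indep: "M.indep_sets (\<lambda>b. sigma_sets (space M) (\<Union>oi\<in>I b. E oi)) UNIV"
  proof (rule M.indep_sets_collect_sigma)
    show "M.indep_sets E (\<Union>b\<in>UNIV. I b)"
      using \<xi>_indep[of k] unfolding E_def[abs_def] by (rule M.indep_sets_mono_index[rotated]) simp
    show "disjoint_family_on I UNIV" unfolding disjoint_family_on_def I_def using ij by auto
  qed (rule stable)
  have "sigma_sets (space M) (\<Union>oi\<in>I True. E oi) = sets (past_and_sample k j)"
    unfolding sets_past_and_sample I_def E_def by (auto intro: arg_cong[where f="sigma_sets _"])
  moreover have "\<xi> k i -` B \<inter> space M \<in> sigma_sets (space M) (\<Union>oi\<in>I False. E oi)"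
    using B unfolding I_def E_def by (auto intro: sigma_sets.Basic)
  ultimately have "\<forall>b\<in>UNIV. (if b then A else \<xi> k i -` B \<inter> space M) \<in> sigma_sets (space M) (\<Union>oi\<in>I b. E oi)"
    using A by auto
  from M.indep_setsD[OF indep subset_UNIV _ _ this]
  show ?thesis unfolding UNIV_bool by (simp add: Int_commute mult.commute)
qed

lemma set_integral_noise_inner_eq_0:
  assumes B: "B \<in> sets (G k)" and ij: "i \<noteq> j"
  shows "(\<integral>\<omega>. indicator B \<omega> * (noise k i \<omega> \<bullet> noise k j \<omega>) \<partial>M) = 0"
proof -
  let ?H = "past_and_sample k j"
  have [measurable]: "x k \<in> borel_measurable ?H" "\<xi> k j \<in> measurable ?H P" "B \<in> sets ?H"
    using measurable_from_subalg[OF subalgebra_past_and_sample_G x_measurable_G] \<xi>_measurable_past_and_sample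
      B subalgebra_past_and_sample_G[of k j] by (auto simp: subalgebra_def)
  have [measurable]: "noise k j \<in> borel_measurable ?H"
    using measurable_gradF_comp[of "x k" ?H "\<xi> k j"] unfolding noise_def by measurable
  \<comment> \<open>freeze noise k j, which is independent of sample i, and average over sample i\<close>
  define \<Phi> where "\<Phi> p = indicator B (fst p) * ((gradF (x k (fst p)) (snd p) - gradf (x k (fst p))) \<bullet> noise k j (fst p))" for p
  have "(\<lambda>p. gradF (x k (fst p)) (snd p)) \<in> borel_measurable (?H \<Otimes>\<^sub>M P)"
    by (rule measurable_gradF_comp) measurable
  then have \<Phi>_meas: "\<Phi> \<in> borel_measurable (?H \<Otimes>\<^sub>M P)" unfolding \<Phi>_def by measurable
  have "(\<integral>s. \<Phi> (\<omega>, s) \<partial>P) = 0" for \<omega>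
  proof -
    have "(\<integral>s. gradF (x k \<omega>) s - gradf (x k \<omega>) \<partial>P) = 0"
      using gradF_int by (simp add: gradf_exp P.prob_space)
    then show ?thesis unfolding \<Phi>_def
      using integral_inner_left[of "noise k j \<omega>" P "\<lambda>s. gradF (x k \<omega>) s - gradf (x k \<omega>)"] gradF_int by simp
  qed
  moreover have "integrable M (\<lambda>\<omega>. \<Phi> (\<omega>, \<xi> k i \<omega>))"
    using integrable_indicator_noise_inner[OF B, of i j] unfolding \<Phi>_def noise_def by simp
  ultimately have "(\<integral>\<omega>. \<Phi> (\<omega>, \<xi> k i \<omega>) \<partial>M) = 0"
    by (intro integral_freeze_eq_0[OF M_prob subalgebra_past_and_sample \<xi>_meas \<xi>_distr
          indep_sample_past_and_sample[OF ij] \<Phi>_meas])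
  then show ?thesis unfolding \<Phi>_def noise_def by simp
qed

lemma set_integral_noise_sum_sq:
  assumes B: "B \<in> sets (G k)"
  shows "integrable M (\<lambda>\<omega>. indicator B \<omega> * (norm (\<Sum>i<m. noise k i \<omega>))^2)"
    "(\<integral>\<omega>. indicator B \<omega> * (norm (\<Sum>i<m. noise k i \<omega>))^2 \<partial>M) \<le> real m * \<sigma>^2 * measure M B"
proof -
  define c where "c i j \<omega> = indicator B \<omega> * (noise k i \<omega> \<bullet> noise k j \<omega>)" for i j \<omega>
  have int: "integrable M (c i j)" for i j unfolding c_def by (rule integrable_indicator_noise_inner[OF B])
  have expand: "(\<lambda>\<omega>. indicator B \<omega> * (norm (\<Sum>i<m. noise k i \<omega>))^2) = (\<lambda>\<omega>. \<Sum>i<m. \<Sum>j<m. c i j \<omega>)"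
    unfolding c_def power2_norm_eq_inner inner_sum_left inner_sum_right sum_distrib_left
    by (rule ext) (rule sum.swap)
  show "integrable M (\<lambda>\<omega>. indicator B \<omega> * (norm (\<Sum>i<m. noise k i \<omega>))^2)"
    unfolding expand using int by auto
  \<comment> \<open>the cross terms vanish, so only the m diagonal terms remain\<close>
  have "(\<Sum>j<m. integral\<^sup>L M (c i j)) = integral\<^sup>L M (c i i)" if "i < m" for i
    using that set_integral_noise_inner_eq_0[OF B] unfolding c_def
    by (subst sum.mono_neutral_cong_right[where S="{i}"]) auto
  moreover have "integral\<^sup>L M (c i i) \<le> \<sigma>^2 * measure M B" for i
    unfolding c_def using set_integral_noise_sq(2)[OF B, of i] by (simp add: power2_norm_eq_inner)
  ultimately have "(\<Sum>i<m. \<Sum>j<m. integral\<^sup>L M (c i j)) \<le> (\<Sum>i<m. \<sigma>^2 * measure M B)"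
    by (intro sum_mono) auto
  then show "(\<integral>\<omega>. indicator B \<omega> * (norm (\<Sum>i<m. noise k i \<omega>))^2 \<partial>M) \<le> real m * \<sigma>^2 * measure M B"
    unfolding expand using int by simp
qed

lemma set_nn_integral_noise_mean_sq_le:
  assumes B: "B \<in> sets (G k)" and m: "m \<ge> 1"
  shows "(\<integral>\<^sup>+\<omega>. ennreal (indicator B \<omega> * (norm (\<Sum>i<m. noise k i \<omega>))^2 / (real m)^2) \<partial>M)
      \<le> ennreal (\<sigma>^2 / real m * measure M B)"
proof -
  note int = set_integral_noise_sum_sq[OF B, of m]
  have "(\<integral>\<^sup>+\<omega>. ennreal (indicator B \<omega> * (norm (\<Sum>i<m. noise k i \<omega>))^2 / (real m)^2) \<partial>M)
      = ennreal ((\<integral>\<omega>. indicator B \<omega> * (norm (\<Sum>i<m. noise k i \<omega>))^2 \<partial>M) / (real m)^2)"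
    using int(1) by (subst nn_integral_eq_integral) auto
  also have "\<dots> \<le> ennreal (real m * \<sigma>^2 * measure M B / (real m)^2)"
    using int(2) by (intro ennreal_leI divide_right_mono) auto
  also have "real m * \<sigma>^2 * measure M B / (real m)^2 = \<sigma>^2 / real m * measure M B"
    using m by (simp add: power2_eq_square)
  finally show ?thesis .
qed

lemma grad_err_AE:
  "AE \<omega> in M. (threshold k \<omega> > 0 \<longrightarrow>
       grad_err k \<omega> = - ((1 / real (batch k \<omega>)) *\<^sub>R (\<Sum>i<batch k \<omega>. noise k i \<omega>)))
     \<and> (threshold k \<omega> = 0 \<longrightarrow> grad_err k \<omega> = 0)"
  using sample_rule[of k]
proof eventually_elim
  case (elim \<omega>)
  have rule: "(threshold k \<omega> > 0 \<longrightarrow> N k \<omega> = batch k \<omega>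
       \<and> g k \<omega> = (1 / real (N k \<omega>)) *\<^sub>R (\<Sum>i<N k \<omega>. gradF (x k \<omega>) (\<xi> k i \<omega>)))
     \<and> (threshold k \<omega> = 0 \<longrightarrow> g k \<omega> = gradf (x k \<omega>))"
    using elim by (simp add: Let_def threshold_def res_cond_def res_def[abs_def] batch_def)
  have "(1 / real n) *\<^sub>R (\<Sum>i<n. noise k i \<omega>)
      = (1 / real n) *\<^sub>R (\<Sum>i<n. gradF (x k \<omega>) (\<xi> k i \<omega>)) - gradf (x k \<omega>)" if "n \<ge> 1" for n
    using that unfolding noise_def by (simp add: sum_subtractf scaleR_right_diff_distrib sum_constant_scaleR)
  then show ?case using rule batch_ge_1[of k \<omega>] unfolding grad_err_def by auto
qed

definition batch_event :: "nat \<Rightarrow> 'w set \<Rightarrow> nat \<Rightarrow> 'w set" where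
  "batch_event k A n = A \<inter> {\<omega> \<in> space M. threshold k \<omega> > 0 \<and> batch k \<omega> = Suc n}"

lemma batch_event_G: "A \<in> sets (G k) \<Longrightarrow> batch_event k A n \<in> sets (G k)"
proof -
  have "{\<omega> \<in> space (G k). 0 < threshold k \<omega> \<and> batch k \<omega> = Suc n} \<in> sets (G k)" by measurable
  then show "A \<in> sets (G k) \<Longrightarrow> batch_event k A n \<in> sets (G k)"
    unfolding batch_event_def by (metis (no_types) sets.Int space_G)
qed

lemma set_nn_integral_grad_err_sq_le_on_batch_event:
  assumes A: "A \<in> sets (G k)"
  shows "(\<integral>\<^sup>+\<omega>. indicator (batch_event k A n) \<omega> * ennreal (indicator A \<omega> * (norm (grad_err k \<omega>))^2) \<partial>M)
    \<le> (\<integral>\<^sup>+\<omega>. indicator (batch_event k A n) \<omega> * ennreal (indicator A \<omega> * batch_var k \<omega>) \<partial>M)"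
proof -
  let ?C = "batch_event k A n"
  have [measurable]: "?C \<in> sets M" using batch_event_G[OF A] sets_G_subset by auto
  \<comment> \<open>on this event the gradient error is the mean of Suc n independent noise terms\<close>
  have "(\<integral>\<^sup>+\<omega>. indicator ?C \<omega> * ennreal (indicator A \<omega> * (norm (grad_err k \<omega>))^2) \<partial>M)
      = (\<integral>\<^sup>+\<omega>. ennreal (indicator ?C \<omega> * (norm (\<Sum>i<Suc n. noise k i \<omega>))^2 / (real (Suc n))^2) \<partial>M)"
    using grad_err_AE[of k]
    by (intro nn_integral_cong_AE, eventually_elim)
      (auto simp: batch_event_def indicator_def power_divide simp del: of_nat_Suc)
  also have "\<dots> \<le> ennreal (\<sigma>^2 / real (Suc n) * measure M ?C)"
    by (rule set_nn_integral_noise_mean_sq_le[OF batch_event_G[OF A]]) simp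
  also have "\<dots> = (\<integral>\<^sup>+\<omega>. ennreal (\<sigma>^2 / real (Suc n)) * indicator ?C \<omega> \<partial>M)"
    by (subst nn_integral_cmult_indicator) (simp_all add: M.emeasure_eq_measure ennreal_mult'[symmetric])
  also have "\<dots> = (\<integral>\<^sup>+\<omega>. indicator ?C \<omega> * ennreal (indicator A \<omega> * batch_var k \<omega>) \<partial>M)"
    by (intro nn_integral_cong) (auto simp: batch_event_def indicator_def batch_var_def simp del: of_nat_Suc)
  finally show ?thesis .
qed

lemma set_nn_integral_grad_err_sq_le:
  assumes A: "A \<in> sets (G k)"
  shows "(\<integral>\<^sup>+\<omega>. ennreal (indicator A \<omega> * (norm (grad_err k \<omega>))^2) \<partial>M)
    \<le> (\<integral>\<^sup>+\<omega>. ennreal (indicator A \<omega> * batch_var k \<omega>) \<partial>M)"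
proof -
  have A_M[measurable]: "A \<in> sets M" using A sets_G_subset by auto
  show ?thesis
  proof (rule nn_integral_mono_partition[where C="batch_event k A"])
    show "batch_event k A n \<in> sets M" for n using batch_event_G[OF A] sets_G_subset by auto
    show "disjoint_family (batch_event k A)" unfolding disjoint_family_on_def batch_event_def by auto
    show "AE \<omega> in M. ennreal (indicator A \<omega> * (norm (grad_err k \<omega>))^2)
        \<le> indicator (\<Union>n. batch_event k A n) \<omega> * ennreal (indicator A \<omega> * (norm (grad_err k \<omega>))^2)"
      using grad_err_AE[of k]
    proof eventually_elim
      case (elim \<omega>)
      show ?case
      proof (cases "\<omega> \<in> A \<and> threshold k \<omega> > 0")
        case True
        then have "\<omega> \<in> batch_event k A (batch k \<omega> - 1)"
          using batch_ge_1[of k \<omega>] sets.sets_into_space[OF A_M] unfolding batch_event_def by auto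
        then show ?thesis by (auto simp: indicator_def)
      qed (use elim threshold_nonneg[of k \<omega>] in \<open>auto simp: indicator_def\<close>)
    qed
    show "(\<lambda>\<omega>. ennreal (indicator A \<omega> * (norm (grad_err k \<omega>))^2)) \<in> borel_measurable M"
      by measurable
    show "(\<lambda>\<omega>. ennreal (indicator A \<omega> * batch_var k \<omega>)) \<in> borel_measurable M"
      by measurable
  qed (rule set_nn_integral_grad_err_sq_le_on_batch_event[OF A])
qed

lemma res_true_res_cond_AE: "AE \<omega> in M. (norm (res_true k \<omega> - res_cond k \<omega>))^2 \<le> batch_var k \<omega>"
proof (rule AE_le_of_bounded_set_nn_integral_le[OF subalgebra_G])
  show "(\<lambda>\<omega>. (norm (res_true k \<omega> - res_cond k \<omega>))^2) \<in> borel_measurable (G k)"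
    unfolding res_cond_def by measurable
  show "(\<integral>\<^sup>+\<omega>. ennreal (batch_var k \<omega>) \<partial>M) < \<infinity>"
  proof (rule le_less_trans)
    show "(\<integral>\<^sup>+\<omega>. ennreal (batch_var k \<omega>) \<partial>M) \<le> (\<integral>\<^sup>+\<omega>. ennreal (\<sigma>^2) \<partial>M)"
      using batch_var_le_sigma by (intro nn_integral_mono ennreal_leI)
  qed (simp add: M.emeasure_space_1)
  fix A c assume A: "A \<in> sets (G k)" and bound: "\<And>\<omega>. \<omega> \<in> A \<Longrightarrow> (norm (res_true k \<omega> - res_cond k \<omega>))^2 \<le> c"
  \<comment> \<open>conditioning on G k is an L2 contraction and res_true k is G k measurable\<close>
  have "(\<integral>\<^sup>+\<omega>. ennreal (indicator A \<omega> * (norm (res_true k \<omega> - res_cond k \<omega>))^2) \<partial>M)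
      \<le> (\<integral>\<^sup>+\<omega>. ennreal (indicator A \<omega> * (norm (res_true k \<omega> - res k \<omega>))^2) \<partial>M)"
    unfolding res_cond_def
  proof (rule M.set_nn_integral_dist_vcond_exp_le[OF subalgebra_G res_integrable _ A, where c="sqrt c"])
    show "norm (res_true k \<omega> - vcond_exp M (G k) (res k) \<omega>) \<le> sqrt c" if "\<omega> \<in> A" for \<omega>
      using bound[OF that] unfolding res_cond_def by (rule real_le_rsqrt)
  qed measurable
  also have "\<dots> \<le> (\<integral>\<^sup>+\<omega>. ennreal (indicator A \<omega> * (norm (grad_err k \<omega>))^2) \<partial>M)"
  proof (intro nn_integral_mono ennreal_leI)
    fix \<omega> assume "\<omega> \<in> space M"
    then have "(norm (res_true k \<omega> - res k \<omega>))^2 \<le> (norm (grad_err k \<omega>))^2"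
      using norm_res_true_res_le by (simp add: power_mono)
    then show "indicator A \<omega> * (norm (res_true k \<omega> - res k \<omega>))^2 \<le> indicator A \<omega> * (norm (grad_err k \<omega>))^2"
      by (simp add: indicator_def)
  qed
  also have "\<dots> \<le> (\<integral>\<^sup>+\<omega>. ennreal (indicator A \<omega> * batch_var k \<omega>) \<partial>M)"
    by (rule set_nn_integral_grad_err_sq_le[OF A])
  finally show "(\<integral>\<^sup>+\<omega>. ennreal (indicator A \<omega> * (norm (res_true k \<omega> - res_cond k \<omega>))^2) \<partial>M)
      \<le> (\<integral>\<^sup>+\<omega>. ennreal (indicator A \<omega> * batch_var k \<omega>) \<partial>M)" .
qed (auto simp: batch_var_nonneg)

lemma nn_integral_grad_err_le_batch_var:
  "(\<integral>\<^sup>+\<omega>. ennreal ((norm (grad_err k \<omega>))^2) \<partial>M) \<le> (\<integral>\<^sup>+\<omega>. ennreal (batch_var k \<omega>) \<partial>M)"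
proof -
  have "(\<integral>\<^sup>+\<omega>. ennreal ((norm (grad_err k \<omega>))^2) \<partial>M)
      = (\<integral>\<^sup>+\<omega>. ennreal (indicator (space M) \<omega> * (norm (grad_err k \<omega>))^2) \<partial>M)"
    by (intro nn_integral_cong) simp
  also have "\<dots> \<le> (\<integral>\<^sup>+\<omega>. ennreal (indicator (space M) \<omega> * batch_var k \<omega>) \<partial>M)"
    by (rule set_nn_integral_grad_err_sq_le) (metis sets.top space_G)
  also have "\<dots> = (\<integral>\<^sup>+\<omega>. ennreal (batch_var k \<omega>) \<partial>M)"
    by (intro nn_integral_cong) simp
  finally show ?thesis .
qed

lemma nn_integral_grad_err_le_sigma:
  "(\<integral>\<^sup>+\<omega>. ennreal ((norm (grad_err k \<omega>))^2) \<partial>M) \<le> ennreal (\<sigma>^2)"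
proof -
  have "(\<integral>\<^sup>+\<omega>. ennreal ((norm (grad_err k \<omega>))^2) \<partial>M) \<le> (\<integral>\<^sup>+\<omega>. ennreal (batch_var k \<omega>) \<partial>M)"
    by (rule nn_integral_grad_err_le_batch_var)
  also have "\<dots> \<le> (\<integral>\<^sup>+\<omega>. ennreal (\<sigma>^2) \<partial>M)"
    using batch_var_le_sigma by (intro nn_integral_mono ennreal_leI)
  also have "\<dots> = ennreal (\<sigma>^2)" by (simp add: M.emeasure_space_1)
  finally show ?thesis .
qed

lemma nn_integral_grad_err_le_threshold:
  "(\<integral>\<^sup>+\<omega>. ennreal ((norm (grad_err k \<omega>))^2) \<partial>M)
    \<le> ennreal (\<eta>^2 / 4) * (\<integral>\<^sup>+\<omega>. ennreal ((norm (res k \<omega>))^2) \<partial>M) + ennreal (\<iota>0^2 * (\<delta> k)^2)"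
proof -
  have "(\<integral>\<^sup>+\<omega>. ennreal (batch_var k \<omega>) \<partial>M)
      \<le> (\<integral>\<^sup>+\<omega>. ennreal (\<eta>^2 / 4) * ennreal ((norm (res_cond k \<omega>))^2) + ennreal (\<iota>0^2 * (\<delta> k)^2) \<partial>M)"
    using batch_var_le_threshold
    by (intro nn_integral_mono) (simp add: threshold_def ennreal_plus[symmetric] ennreal_mult[symmetric]
        ennreal_leI del: ennreal_plus)
  also have "\<dots> = ennreal (\<eta>^2 / 4) * (\<integral>\<^sup>+\<omega>. ennreal ((norm (res_cond k \<omega>))^2) \<partial>M) + ennreal (\<iota>0^2 * (\<delta> k)^2)"
    by (subst nn_integral_add) (auto simp: nn_integral_cmult M.emeasure_space_1)
  also have "\<dots> \<le> ennreal (\<eta>^2 / 4) * (\<integral>\<^sup>+\<omega>. ennreal ((norm (res k \<omega>))^2) \<partial>M) + ennreal (\<iota>0^2 * (\<delta> k)^2)"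
    unfolding res_cond_def
    by (intro add_right_mono mult_left_mono M.nn_integral_vcond_exp_sq_le subalgebra_G res_integrable) simp
  finally show ?thesis by (rule order_trans[OF nn_integral_grad_err_le_batch_var])
qed

text \<open>The optimality gap is only controlled from iteration 1 on, since x0 need not lie in the
  domain of h.\<close>

definition gap :: "nat \<Rightarrow> 'w \<Rightarrow> real" where
  "gap k \<omega> = f (x k \<omega>) + h_real (x k \<omega>) - phi_low"

lemma gap_measurable[measurable]: "gap k \<in> borel_measurable M"
  unfolding gap_def by measurable

lemma gap_Suc_nonneg: "\<omega> \<in> space M \<Longrightarrow> gap (Suc k) \<omega> \<ge> 0"
  unfolding gap_def using phi_low_le_real[OF h_x_Suc_finite] by simp

lemma gap_descent:
  assumes \<omega>: "\<omega> \<in> space M"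
  shows "gap (Suc (Suc k)) \<omega> + \<alpha> * (1 - \<alpha> * L - \<eta> / 4) * (norm (res (Suc k) \<omega>))^2
     \<le> gap (Suc k) \<omega> + (\<alpha> / \<eta>) * (norm (grad_err (Suc k) \<omega>))^2"
proof -
  define r where "r = norm (res (Suc k) \<omega>)"
  define e where "e = norm (grad_err (Suc k) \<omega>)"
  have "norm (x (Suc k) \<omega> - x (Suc (Suc k)) \<omega>) = \<alpha> * r"
    unfolding r_def res_def using alpha(1) by simp
  then have "gap (Suc (Suc k)) \<omega> + (1 / \<alpha> - L) * (\<alpha> * r)^2 \<le> gap (Suc k) \<omega> + e * (\<alpha> * r)"
    using prox_grad_step_le[OF h_x_Suc_finite[OF \<omega>, of k], where v="g (Suc k) \<omega>"] x_step[OF \<omega>, of "Suc k"]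
    unfolding gap_def e_def grad_err_def proxh_def by simp
  moreover have "(1 / \<alpha> - L) * (\<alpha> * r)^2 = \<alpha> * (1 - \<alpha> * L) * r^2"
    using alpha(1) by (simp add: power2_eq_square field_simps)
  moreover have "e * r \<le> \<eta> / 4 * r^2 + e^2 / \<eta>"
    using eta(1) sum_squares_bound[of "\<eta> / 2 * r" e] by (simp add: power2_eq_square field_simps)
  then have "e * (\<alpha> * r) \<le> \<alpha> * (\<eta> / 4 * r^2 + e^2 / \<eta>)"
    using alpha(1) mult_left_mono[of "e * r" _ \<alpha>] by (simp add: mult.left_commute)
  ultimately show ?thesis unfolding r_def[symmetric] e_def[symmetric] by (simp add: algebra_simps)
qed

lemma res_true_le_gap:
  assumes \<omega>: "\<omega> \<in> space M"
  shows "\<alpha> * (1 - \<alpha> * L) * (norm (res_true (Suc k) \<omega>))^2 \<le> gap (Suc k) \<omega>"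
proof -
  define z where "z = x (Suc k) \<omega>"
  define p where "p = proxh (z - \<alpha> *\<^sub>R gradf z)"
  have "f p + h_real p + (1 / \<alpha> - L) * (norm (z - p))^2 \<le> f z + h_real z"
    using prox_grad_step_le[OF h_x_Suc_finite[OF \<omega>, of k], where v="gradf z"] unfolding p_def z_def by simp
  moreover have "phi_low \<le> f p + h_real p" unfolding p_def by (rule phi_low_le_real[OF h_proxh_finite])
  moreover have zp: "norm (z - p) = \<alpha> * norm (res_true (Suc k) \<omega>)"
    unfolding res_true_def z_def p_def using alpha(1) by simp
  have "(1 / \<alpha> - L) * (norm (z - p))^2 = \<alpha> * (1 - \<alpha> * L) * (norm (res_true (Suc k) \<omega>))^2"
    unfolding zp using alpha(1) by (simp add: power2_eq_square field_simps)
  ultimately show ?thesis unfolding gap_def z_def[symmetric] by simp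
qed

lemma phi_proxh_le:
  "f (proxh y) + h_real (proxh y) \<le> f (proxh y') + h_real (proxh y')
     + (norm (y - proxh y) / \<alpha> + norm (gradf (proxh y'))) * norm (y - y') + L * (norm (y - y'))^2"
proof -
  define p where "p = proxh y"
  define p' where "p' = proxh y'"
  define X where "X = (y - p) \<bullet> (p' - p)"
  have d: "norm (p - p') \<le> norm (y - y')" unfolding p_def p'_def by (rule proxh_nonexpansive)
  have "h_real p + X / \<alpha> \<le> h_real p'"
    using proxh_variational[OF h_proxh_finite[of y'], of y]
      h_eq_h_real[OF h_proxh_finite[of y]] h_eq_h_real[OF h_proxh_finite[of y']]
    unfolding p_def p'_def X_def by simp
  moreover have "- X \<le> norm (y - p) * norm (y - y')"
    using norm_cauchy_schwarz[of "y - p" "p - p'"] mult_left_mono[OF d norm_ge_zero[of "y - p"]]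
    unfolding X_def by (simp add: inner_diff_right)
  then have "- X / \<alpha> \<le> norm (y - p) / \<alpha> * norm (y - y')"
    using divide_right_mono[of "- X" _ \<alpha>] alpha(1) by simp
  moreover have "gradf p' \<bullet> (p - p') \<le> norm (gradf p') * norm (y - y')"
    using norm_cauchy_schwarz[of "gradf p'" "p - p'"] mult_left_mono[OF d norm_ge_zero[of "gradf p'"]]
    by linarith
  moreover have "L * (norm (p - p'))^2 \<le> L * (norm (y - y'))^2"
    using d L_pos by (intro mult_left_mono power_mono) auto
  ultimately show ?thesis
    using descent[of p p'] unfolding p_def[symmetric] p'_def[symmetric] distrib_right by simp
qed

lemma gap_1_le: "\<exists>K0 K1. \<forall>\<omega>\<in>space M. gap 1 \<omega> \<le> K0 + K1 * (norm (grad_err 0 \<omega>))^2"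
proof -
  define y' where "y' = x0 - \<alpha> *\<^sub>R gradf x0"
  define c where "c = norm (y' - proxh y') / \<alpha> + norm (gradf (proxh y'))"
  define K0 where "K0 = f (proxh y') + h_real (proxh y') - phi_low + \<alpha> * c"
  define K1 where "K1 = 2 * \<alpha> + \<alpha> * c + L * \<alpha>^2"
  have c: "c \<ge> 0" unfolding c_def using alpha(1) by simp
  have "gap 1 \<omega> \<le> K0 + K1 * (norm (grad_err 0 \<omega>))^2" if \<omega>: "\<omega> \<in> space M" for \<omega>
  proof -
    define y where "y = x0 - \<alpha> *\<^sub>R g 0 \<omega>"
    define u where "u = norm (grad_err 0 \<omega>)"
    define B where "B = norm (y - proxh y) / \<alpha> + norm (gradf (proxh y'))"
    have u: "0 \<le> u" unfolding u_def by simp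
    have x1: "x 1 \<omega> = proxh y" using x_step[OF \<omega>, of 0] x_init[OF \<omega>] unfolding y_def proxh_def by simp
    have y_y': "norm (y - y') = \<alpha> * u"
      using alpha(1) x_init[OF \<omega>] unfolding y_def y'_def u_def grad_err_def
      by (simp add: algebra_simps flip: scaleR_diff_right)
    have step1: "gap 1 \<omega> \<le> f (proxh y') + h_real (proxh y') - phi_low + B * (\<alpha> * u) + L * (\<alpha> * u)^2"
      using phi_proxh_le[of y y'] unfolding gap_def x1 y_y' B_def by linarith
    have "norm (y - proxh y) \<le> norm (y - y') + (norm (y' - proxh y') + norm (proxh y' - proxh y))"
      by (intro norm_diff_triangle_le[where y=y'] norm_diff_triangle_le[where y="proxh y'"] order_refl)
    also have "\<dots> \<le> 2 * (\<alpha> * u) + norm (y' - proxh y')"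
      using proxh_nonexpansive[of y' y] y_y' by (simp add: norm_minus_commute)
    finally have "B \<le> 2 * u + c"
      using alpha(1) unfolding B_def c_def by (simp add: divide_simps mult.commute)
    then have "B * (\<alpha> * u) \<le> (2 * u + c) * (\<alpha> * u)"
      using alpha(1) u by (intro mult_right_mono) simp_all
    also have "\<dots> = \<alpha> * c * u + 2 * \<alpha> * u^2" by (simp add: algebra_simps power2_eq_square)
    also have "\<dots> \<le> \<alpha> * c * (1 + u^2) + 2 * \<alpha> * u^2"
      using sum_squares_bound[of u 1] u c alpha(1) by (intro add_right_mono mult_left_mono)
        (simp_all add: power2_eq_square)
    finally have step2: "B * (\<alpha> * u) \<le> \<alpha> * c + (2 * \<alpha> + \<alpha> * c) * u^2"
      by (simp add: algebra_simps)
    have "K0 + K1 * u^2 = f (proxh y') + h_real (proxh y') - phi_low + (\<alpha> * c + (2 * \<alpha> + \<alpha> * c) * u^2)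
        + L * (\<alpha> * u)^2"
      unfolding K0_def K1_def by (simp add: algebra_simps power2_eq_square)
    with step1 step2 show ?thesis unfolding u_def by linarith
  qed
  then show ?thesis by blast
qed

lemma nn_integral_gap_descent:
  "(\<integral>\<^sup>+\<omega>. ennreal (gap (Suc (Suc k)) \<omega>) \<partial>M)
     + ennreal (\<alpha> * (1 - \<alpha> * L - \<eta> / 4)) * (\<integral>\<^sup>+\<omega>. ennreal ((norm (res (Suc k) \<omega>))^2) \<partial>M)
   \<le> (\<integral>\<^sup>+\<omega>. ennreal (gap (Suc k) \<omega>) \<partial>M)
     + ennreal (\<alpha> / \<eta>) * (\<integral>\<^sup>+\<omega>. ennreal ((norm (grad_err (Suc k) \<omega>))^2) \<partial>M)"
  using alpha_L alpha(1) eta gap_Suc_nonneg gap_descent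
  by (intro nn_integral_add_cmult_le) (auto intro!: mult_nonneg_nonneg)

lemma nn_integral_res_true_le:
  "(\<integral>\<^sup>+\<omega>. ennreal ((norm (res_true k \<omega>))^2) \<partial>M)
    \<le> 2 * (\<integral>\<^sup>+\<omega>. ennreal ((norm (res k \<omega>))^2) \<partial>M) + 2 * (\<integral>\<^sup>+\<omega>. ennreal ((norm (grad_err k \<omega>))^2) \<partial>M)"
proof -
  have "(norm (res_true k \<omega>))^2 \<le> 2 * (norm (res k \<omega>))^2 + 2 * (norm (grad_err k \<omega>))^2"
    if "\<omega> \<in> space M" for \<omega>
  proof -
    have "(norm (res_true k \<omega> - res k \<omega>))^2 \<le> (norm (grad_err k \<omega>))^2"
      using norm_res_true_res_le[OF that] by (simp add: power_mono)
    moreover have "(norm (res_true k \<omega>))^2 \<le> 2 * (norm (res k \<omega>))^2 + 2 * (norm (res_true k \<omega> - res k \<omega>))^2"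
      using power2_norm_add_le[of "res k \<omega>" "res_true k \<omega> - res k \<omega>"] by simp
    ultimately show ?thesis by linarith
  qed
  then have "(\<integral>\<^sup>+\<omega>. ennreal ((norm (res_true k \<omega>))^2) \<partial>M) + ennreal 0 * (\<integral>\<^sup>+\<omega>. ennreal 0 \<partial>M)
      \<le> (\<integral>\<^sup>+\<omega>. ennreal (2 * (norm (res k \<omega>))^2) \<partial>M) + ennreal 2 * (\<integral>\<^sup>+\<omega>. ennreal ((norm (grad_err k \<omega>))^2) \<partial>M)"
    by (intro nn_integral_add_cmult_le[where v="\<lambda>_. 0"]) auto
  then show ?thesis by (simp add: ennreal_mult nn_integral_cmult)
qed

lemma nn_integral_gap_finite: "(\<integral>\<^sup>+\<omega>. ennreal (gap (Suc k) \<omega>) \<partial>M) < \<infinity>"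
proof (induction k)
  case 0
  obtain K0 K1 where K: "\<And>\<omega>. \<omega> \<in> space M \<Longrightarrow> gap 1 \<omega> \<le> K0 + K1 * (norm (grad_err 0 \<omega>))^2"
    using gap_1_le by blast
  have "(\<integral>\<^sup>+\<omega>. ennreal (gap 1 \<omega>) \<partial>M) \<le> (\<integral>\<^sup>+\<omega>. ennreal \<bar>K0\<bar> + ennreal \<bar>K1\<bar> * ennreal ((norm (grad_err 0 \<omega>))^2) \<partial>M)"
  proof (intro nn_integral_mono)
    fix \<omega> assume "\<omega> \<in> space M"
    then have "gap 1 \<omega> \<le> \<bar>K0\<bar> + \<bar>K1\<bar> * (norm (grad_err 0 \<omega>))^2"
      using K[of \<omega>] abs_ge_self[of K0] mult_right_mono[OF abs_ge_self[of K1], of "(norm (grad_err 0 \<omega>))^2"]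
      by simp
    then show "ennreal (gap 1 \<omega>) \<le> ennreal \<bar>K0\<bar> + ennreal \<bar>K1\<bar> * ennreal ((norm (grad_err 0 \<omega>))^2)"
      by (simp add: ennreal_plus[symmetric] ennreal_mult[symmetric] ennreal_leI del: ennreal_plus)
  qed
  also have "\<dots> = ennreal \<bar>K0\<bar> + ennreal \<bar>K1\<bar> * (\<integral>\<^sup>+\<omega>. ennreal ((norm (grad_err 0 \<omega>))^2) \<partial>M)"
    by (simp add: nn_integral_add nn_integral_cmult M.emeasure_space_1)
  also have "\<dots> \<le> ennreal \<bar>K0\<bar> + ennreal \<bar>K1\<bar> * ennreal (\<sigma>^2)"
    by (intro add_left_mono mult_left_mono nn_integral_grad_err_le_sigma) simp
  finally show ?case by (simp add: le_less_trans flip: ennreal_mult)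
next
  case (Suc k)
  have "(\<integral>\<^sup>+\<omega>. ennreal (gap (Suc (Suc k)) \<omega>) \<partial>M)
      \<le> (\<integral>\<^sup>+\<omega>. ennreal (gap (Suc k) \<omega>) \<partial>M)
        + ennreal (\<alpha> / \<eta>) * (\<integral>\<^sup>+\<omega>. ennreal ((norm (grad_err (Suc k) \<omega>))^2) \<partial>M)"
    using nn_integral_gap_descent[of k] by (rule order_trans[rotated]) simp
  also have "\<dots> \<le> (\<integral>\<^sup>+\<omega>. ennreal (gap (Suc k) \<omega>) \<partial>M) + ennreal (\<alpha> / \<eta>) * ennreal (\<sigma>^2)"
    by (intro add_left_mono mult_left_mono nn_integral_grad_err_le_sigma) simp
  also have "\<dots> < \<infinity>" using Suc.IH by (simp add: ennreal_mult_less_top)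
  finally show ?case .
qed

lemma nn_integral_res_finite: "(\<integral>\<^sup>+\<omega>. ennreal ((norm (res (Suc k) \<omega>))^2) \<partial>M) < \<infinity>"
proof -
  define c where "c = 1 / (\<alpha> * (1 - \<alpha> * L))"
  have "\<alpha> * (1 - \<alpha> * L) > 0" using alpha(1) alpha_L eta by (intro mult_pos_pos) auto
  then have c: "c > 0" unfolding c_def by simp
  \<comment> \<open>res = res_true - (res_true - res), where res_true is controlled by the gap\<close>
  have "(norm (res (Suc k) \<omega>))^2 + 0 * 0 \<le> 2 * (c * gap (Suc k) \<omega>) + 2 * (norm (grad_err (Suc k) \<omega>))^2"
    if \<omega>: "\<omega> \<in> space M" for \<omega>
  proof -
    have "(norm (res_true (Suc k) \<omega>))^2 \<le> c * gap (Suc k) \<omega>"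
      using res_true_le_gap[OF \<omega>, of k] \<open>\<alpha> * (1 - \<alpha> * L) > 0\<close> unfolding c_def by (simp add: field_simps)
    moreover have "(norm (res (Suc k) \<omega>))^2
        \<le> 2 * (norm (res_true (Suc k) \<omega>))^2 + 2 * (norm (res_true (Suc k) \<omega> - res (Suc k) \<omega>))^2"
      using power2_norm_add_le[of "res_true (Suc k) \<omega>" "res (Suc k) \<omega> - res_true (Suc k) \<omega>"]
      by (simp add: norm_minus_commute)
    moreover have "(norm (res_true (Suc k) \<omega> - res (Suc k) \<omega>))^2 \<le> (norm (grad_err (Suc k) \<omega>))^2"
      using norm_res_true_res_le[OF \<omega>] by (simp add: power_mono)
    ultimately show ?thesis by linarith
  qed
  then have "(\<integral>\<^sup>+\<omega>. ennreal ((norm (res (Suc k) \<omega>))^2) \<partial>M) + ennreal 0 * (\<integral>\<^sup>+\<omega>. ennreal 0 \<partial>M)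
      \<le> (\<integral>\<^sup>+\<omega>. ennreal (2 * (c * gap (Suc k) \<omega>)) \<partial>M) + ennreal 2 * (\<integral>\<^sup>+\<omega>. ennreal ((norm (grad_err (Suc k) \<omega>))^2) \<partial>M)"
    using c gap_Suc_nonneg by (intro nn_integral_add_cmult_le[where v="\<lambda>_. 0"]) auto
  also have "(\<integral>\<^sup>+\<omega>. ennreal (2 * (c * gap (Suc k) \<omega>)) \<partial>M)
      = ennreal (2 * c) * (\<integral>\<^sup>+\<omega>. ennreal (gap (Suc k) \<omega>) \<partial>M)"
    using c gap_Suc_nonneg
    by (subst nn_integral_cmult[symmetric]) (auto intro!: nn_integral_cong simp: ennreal_mult mult.assoc)
  also have "\<dots> + ennreal 2 * (\<integral>\<^sup>+\<omega>. ennreal ((norm (grad_err (Suc k) \<omega>))^2) \<partial>M) < \<infinity>"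
    using nn_integral_gap_finite[of k] le_less_trans[OF nn_integral_grad_err_le_sigma[of "Suc k"]]
    by (simp add: ennreal_mult_less_top)
  finally show ?thesis by simp
qed

definition Egap :: "nat \<Rightarrow> real" where
  "Egap k = enn2real (\<integral>\<^sup>+\<omega>. ennreal (gap k \<omega>) \<partial>M)"

definition Eres :: "nat \<Rightarrow> real" where
  "Eres k = enn2real (\<integral>\<^sup>+\<omega>. ennreal ((norm (res k \<omega>))^2) \<partial>M)"

definition Eres_true :: "nat \<Rightarrow> real" where
  "Eres_true k = enn2real (\<integral>\<^sup>+\<omega>. ennreal ((norm (res_true k \<omega>))^2) \<partial>M)"

definition Eerr :: "nat \<Rightarrow> real" where
  "Eerr k = enn2real (\<integral>\<^sup>+\<omega>. ennreal ((norm (grad_err k \<omega>))^2) \<partial>M)"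

lemma nn_integral_grad_err_finite: "(\<integral>\<^sup>+\<omega>. ennreal ((norm (grad_err k \<omega>))^2) \<partial>M) < \<infinity>"
  using nn_integral_grad_err_le_sigma[of k] by (rule le_less_trans) simp

lemma nn_integral_res_true_finite: "(\<integral>\<^sup>+\<omega>. ennreal ((norm (res_true (Suc k) \<omega>))^2) \<partial>M) < \<infinity>"
  using nn_integral_res_true_le[of "Suc k"] nn_integral_res_finite[of k] nn_integral_grad_err_finite[of "Suc k"]
  by (auto simp: ennreal_mult_less_top intro: le_less_trans)

lemma nn_integral_eq_E:
  "(\<integral>\<^sup>+\<omega>. ennreal (gap (Suc k) \<omega>) \<partial>M) = ennreal (Egap (Suc k))"
  "(\<integral>\<^sup>+\<omega>. ennreal ((norm (res (Suc k) \<omega>))^2) \<partial>M) = ennreal (Eres (Suc k))"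
  "(\<integral>\<^sup>+\<omega>. ennreal ((norm (res_true (Suc k) \<omega>))^2) \<partial>M) = ennreal (Eres_true (Suc k))"
  "(\<integral>\<^sup>+\<omega>. ennreal ((norm (grad_err k \<omega>))^2) \<partial>M) = ennreal (Eerr k)"
  unfolding Egap_def Eres_def Eres_true_def Eerr_def
  using nn_integral_gap_finite[of k] nn_integral_res_finite[of k] nn_integral_res_true_finite[of k]
    nn_integral_grad_err_finite[of k]
  by simp_all

lemma E_nonneg: "0 \<le> Egap k" "0 \<le> Eres k" "0 \<le> Eres_true k" "0 \<le> Eerr k"
  unfolding Egap_def Eres_def Eres_true_def Eerr_def by simp_all

lemma Eerr_le: "Eerr (Suc k) \<le> \<eta>^2 / 4 * Eres (Suc k) + \<iota>0^2 * (\<delta> (Suc k))^2"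
proof -
  have "ennreal (Eerr (Suc k)) \<le> ennreal (\<iota>0^2 * (\<delta> (Suc k))^2 + \<eta>^2 / 4 * Eres (Suc k))"
    using nn_integral_grad_err_le_threshold[of "Suc k"] E_nonneg
    by (subst ennreal_add_mult) (simp_all add: nn_integral_eq_E add.commute)
  then show ?thesis by (subst (asm) ennreal_le_iff) (use E_nonneg in \<open>auto simp: add.commute\<close>)
qed

lemma Egap_descent:
  "Egap (Suc (Suc k)) + \<alpha> / 2 * Eres (Suc k) \<le> Egap (Suc k) + \<alpha> / \<eta> * \<iota>0^2 * (\<delta> (Suc k))^2"
proof -
  have "ennreal (Egap (Suc (Suc k)) + \<alpha> * (1 - \<alpha> * L - \<eta> / 4) * Eres (Suc k))
      \<le> ennreal (Egap (Suc k) + \<alpha> / \<eta> * Eerr (Suc k))"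
  proof (subst (1 2) ennreal_add_mult)
    show "ennreal (Egap (Suc (Suc k))) + ennreal (\<alpha> * (1 - \<alpha> * L - \<eta> / 4)) * ennreal (Eres (Suc k))
        \<le> ennreal (Egap (Suc k)) + ennreal (\<alpha> / \<eta>) * ennreal (Eerr (Suc k))"
      using nn_integral_gap_descent[of k] by (simp only: nn_integral_eq_E)
  qed (use E_nonneg alpha(1) alpha_L eta in \<open>auto intro!: mult_nonneg_nonneg\<close>)
  then have "Egap (Suc (Suc k)) + \<alpha> * (1 - \<alpha> * L - \<eta> / 4) * Eres (Suc k) \<le> Egap (Suc k) + \<alpha> / \<eta> * Eerr (Suc k)"
    by (subst (asm) ennreal_le_iff) (use E_nonneg alpha(1) eta in auto)
  moreover have "\<alpha> / \<eta> * Eerr (Suc k) \<le> \<alpha> * \<eta> / 4 * Eres (Suc k) + \<alpha> / \<eta> * \<iota>0^2 * (\<delta> (Suc k))^2"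
    using mult_left_mono[OF Eerr_le[of k], of "\<alpha> / \<eta>"] alpha(1) eta(1)
    by (simp add: power2_eq_square field_simps)
  \<comment> \<open>the step-size condition leaves at least half of the decrease\<close>
  moreover have "\<alpha> * (\<alpha> * L) \<le> \<alpha> * ((1 - \<eta>) / 2)"
    using alpha_L alpha(1) by (intro mult_left_mono) auto
  then have "\<alpha> / 2 * Eres (Suc k) \<le> (\<alpha> * (1 - \<alpha> * L - \<eta> / 4) - \<alpha> * \<eta> / 4) * Eres (Suc k)"
    using E_nonneg by (intro mult_right_mono) (auto simp: algebra_simps)
  ultimately show ?thesis by (simp add: algebra_simps)
qed

lemma Eres_true_le: "Eres_true (Suc k) \<le> 3 * Eres (Suc k) + 2 * \<iota>0^2 * (\<delta> (Suc k))^2"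
proof -
  have nonneg: "0 \<le> 2 * Eres (Suc k) + 2 * Eerr (Suc k)" using E_nonneg by simp
  have "ennreal (Eres_true (Suc k)) \<le> 2 * ennreal (Eres (Suc k)) + 2 * ennreal (Eerr (Suc k))"
    using nn_integral_res_true_le[of "Suc k"] by (simp only: nn_integral_eq_E)
  also have "\<dots> = ennreal (2 * Eres (Suc k) + 2 * Eerr (Suc k))" using E_nonneg by (simp add: ennreal_mult)
  finally have "Eres_true (Suc k) \<le> 2 * Eres (Suc k) + 2 * Eerr (Suc k)"
    using ennreal_le_iff[OF nonneg] by blast
  moreover have "\<eta>^2 \<le> 1" using eta by (simp add: power_le_one)
  then have "\<eta>^2 / 2 * Eres (Suc k) \<le> Eres (Suc k)"
    using E_nonneg by (intro mult_left_le_one_le) auto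
  ultimately show ?thesis using Eerr_le[of k] by simp
qed

lemma sum_Eres_le:
  "\<alpha> / 2 * (\<Sum>j<K. Eres (Suc j)) \<le> Egap 1 + \<alpha> / \<eta> * \<iota>0^2 * (\<Sum>j<K. (\<delta> (Suc j))^2)"
proof -
  have "Egap (Suc K) + \<alpha> / 2 * (\<Sum>j<K. Eres (Suc j)) \<le> Egap 1 + \<alpha> / \<eta> * \<iota>0^2 * (\<Sum>j<K. (\<delta> (Suc j))^2)"
  proof (induction K)
    case (Suc K)
    then show ?case using Egap_descent[of K] by (simp add: algebra_simps)
  qed simp
  then show ?thesis using E_nonneg(1)[of "Suc K"] by linarith
qed

definition res_true_budget :: real where
  "res_true_budget = 3 * (2 / \<alpha> * (Egap 1 + \<alpha> / \<eta> * \<iota>0^2 * (\<Sum>k. (\<delta> k)^2))) + 2 * \<iota>0^2 * (\<Sum>k. (\<delta> k)^2)"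

lemma sum_Eres_true_le:
  assumes \<delta>: "summable (\<lambda>k. (\<delta> k)^2)"
  shows "(\<Sum>j<K. Eres_true (Suc j)) \<le> res_true_budget"
proof -
  have \<delta>_le: "(\<Sum>j<K. (\<delta> (Suc j))^2) \<le> (\<Sum>k. (\<delta> k)^2)"
    using sum_le_suminf[OF \<delta>, of "Suc ` {..<K}"] by (simp add: sum.reindex)
  moreover have "0 \<le> \<alpha> / \<eta> * \<iota>0^2" using alpha(1) eta(1) by simp
  ultimately have "\<alpha> / \<eta> * \<iota>0^2 * (\<Sum>j<K. (\<delta> (Suc j))^2) \<le> \<alpha> / \<eta> * \<iota>0^2 * (\<Sum>k. (\<delta> k)^2)"
    by (rule mult_left_mono)
  then have "\<alpha> / 2 * (\<Sum>j<K. Eres (Suc j)) \<le> Egap 1 + \<alpha> / \<eta> * \<iota>0^2 * (\<Sum>k. (\<delta> k)^2)"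
    using sum_Eres_le[of K] by linarith
  then have "(\<Sum>j<K. Eres (Suc j)) \<le> 2 / \<alpha> * (Egap 1 + \<alpha> / \<eta> * \<iota>0^2 * (\<Sum>k. (\<delta> k)^2))"
    using alpha(1) by (simp add: field_simps)
  moreover have "(\<Sum>j<K. Eres_true (Suc j)) \<le> 3 * (\<Sum>j<K. Eres (Suc j)) + 2 * \<iota>0^2 * (\<Sum>j<K. (\<delta> (Suc j))^2)"
    using Eres_true_le by (simp add: sum_distrib_left sum.distrib[symmetric] sum_mono)
  moreover have "2 * \<iota>0^2 * (\<Sum>j<K. (\<delta> (Suc j))^2) \<le> 2 * \<iota>0^2 * (\<Sum>k. (\<delta> k)^2)"
    using \<delta>_le by (intro mult_left_mono) auto
  ultimately show ?thesis unfolding res_true_budget_def by linarith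
qed

lemma exists_small_Eres_true:
  assumes \<delta>: "summable (\<lambda>k. (\<delta> k)^2)" and \<epsilon>: "\<epsilon> > 0"
  shows "\<exists>k. k \<le> nat \<lceil>res_true_budget / \<epsilon>\<rceil> + 1 \<and> (\<integral>\<^sup>+\<omega>. ennreal ((norm (res_true k \<omega>))^2) \<partial>M) \<le> ennreal \<epsilon>"
proof (rule ccontr)
  define K where "K = nat \<lceil>res_true_budget / \<epsilon>\<rceil> + 1"
  assume none: "\<not> ?thesis"
  have big: "\<epsilon> < Eres_true (Suc j)" if "j < K" for j
  proof -
    have "\<not> (\<integral>\<^sup>+\<omega>. ennreal ((norm (res_true (Suc j) \<omega>))^2) \<partial>M) \<le> ennreal \<epsilon>"
      using none that unfolding K_def by (metis Suc_leI)
    then show ?thesis unfolding nn_integral_eq_E(3) using \<epsilon> by (simp add: not_le ennreal_less_iff)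
  qed
  have "(\<Sum>j<K. \<epsilon>) < (\<Sum>j<K. Eres_true (Suc j))"
    by (rule sum_strict_mono) (auto simp: big K_def)
  then have "real K * \<epsilon> < (\<Sum>j<K. Eres_true (Suc j))" by simp
  also have "\<dots> \<le> res_true_budget" by (rule sum_Eres_true_le[OF \<delta>])
  finally have "real K * \<epsilon> < res_true_budget" .
  moreover have "res_true_budget / \<epsilon> \<le> real K" unfolding K_def by linarith
  ultimately show False using \<epsilon> by (simp add: field_simps)
qed

lemma res_true_sq_le_threshold:
  assumes "(norm (res_true k \<omega> - res_cond k \<omega>))^2 \<le> batch_var k \<omega>"
  shows "(norm (res_true k \<omega>))^2 \<le> (2 + 8 / \<eta>^2) * threshold k \<omega>"
proof -
  have "\<eta>^2 / 4 * (norm (res_cond k \<omega>))^2 \<le> threshold k \<omega>" unfolding threshold_def by simp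
  then have "(norm (res_cond k \<omega>))^2 \<le> 4 / \<eta>^2 * threshold k \<omega>" using eta(1) by (simp add: field_simps)
  moreover have "(norm (res_true k \<omega>))^2 \<le> 2 * (norm (res_cond k \<omega>))^2 + 2 * (norm (res_true k \<omega> - res_cond k \<omega>))^2"
    using power2_norm_add_le[of "res_cond k \<omega>" "res_true k \<omega> - res_cond k \<omega>"] by simp
  ultimately show ?thesis using assms batch_var_le_threshold[of k \<omega>] by (simp add: algebra_simps)
qed

lemma batch_le_of_res_true:
  assumes \<epsilon>: "0 < \<epsilon>" "\<epsilon> \<le> 1"
  shows "AE \<omega> in M. \<forall>k. \<epsilon> < (norm (res_true k \<omega>))^2 \<longrightarrow> real (N k \<omega>) \<le> (1 + \<sigma>^2 * (2 + 8 / \<eta>^2)) / \<epsilon>"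
  unfolding AE_all_countable
proof
  fix k
  show "AE \<omega> in M. \<epsilon> < (norm (res_true k \<omega>))^2 \<longrightarrow> real (N k \<omega>) \<le> (1 + \<sigma>^2 * (2 + 8 / \<eta>^2)) / \<epsilon>"
    using res_true_res_cond_AE[of k] sample_rule[of k]
  proof eventually_elim
    case (elim \<omega>)
    define c where "c = 2 + 8 / \<eta>^2"
    have c: "c > 0" unfolding c_def using eta(1) by (simp add: add_pos_nonneg)
    show ?case
    proof
      \<comment> \<open>a large true residual forces a large threshold, hence a small sample size\<close>
      assume "\<epsilon> < (norm (res_true k \<omega>))^2"
      then have \<epsilon>_le: "\<epsilon> < c * threshold k \<omega>"
        using res_true_sq_le_threshold[OF elim(1)] unfolding c_def by linarith
      then have pos: "threshold k \<omega> > 0"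
        using threshold_nonneg[of k \<omega>] \<epsilon>(1) by (cases "threshold k \<omega> = 0") auto
      then have "N k \<omega> = batch k \<omega>"
        using elim(2) by (simp add: Let_def threshold_def res_cond_def res_def[abs_def] batch_def)
      then have "real (N k \<omega>) \<le> 1 + \<sigma>^2 / threshold k \<omega>" using batch_le[OF pos] by simp
      also have "\<sigma>^2 / threshold k \<omega> \<le> \<sigma>^2 * c / \<epsilon>"
      proof -
        have "1 / threshold k \<omega> \<le> c / \<epsilon>" using \<epsilon>_le pos \<epsilon>(1) by (simp add: field_simps)
        then show ?thesis using mult_left_mono[of "1 / threshold k \<omega>" "c / \<epsilon>" "\<sigma>^2"] by simp
      qed
      also have "1 + \<sigma>^2 * c / \<epsilon> \<le> (1 + \<sigma>^2 * c) / \<epsilon>"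
        using \<epsilon> by (simp add: field_simps)
      finally show "real (N k \<omega>) \<le> (1 + \<sigma>^2 * (2 + 8 / \<eta>^2)) / \<epsilon>" unfolding c_def by simp
    qed
  qed
qed

lemma res_true_budget_nonneg: "summable (\<lambda>k. (\<delta> k)^2) \<Longrightarrow> res_true_budget \<ge> 0"
  unfolding res_true_budget_def using E_nonneg(1)[of 1] alpha(1) eta(1)
  by (intro add_nonneg_nonneg mult_nonneg_nonneg suminf_nonneg) auto

lemma oracle_complexity:
  assumes \<delta>: "summable (\<lambda>k. (\<delta> k)^2)"
  shows "\<exists>C\<ge>0. \<forall>\<epsilon>. 0 < \<epsilon> \<and> \<epsilon> < 1 \<longrightarrow>
     (AE \<omega> in M.
        let stop = (\<lambda>k. (\<integral>\<^sup>+ \<omega>'. ennreal ((norm ((1 / \<alpha>) *\<^sub>R (x k \<omega>' - prox \<alpha> h (x k \<omega>' - \<alpha> *\<^sub>R gradf (x k \<omega>')))))^2) \<partial>M) \<le> ennreal \<epsilon>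
                   \<or> (norm ((1 / \<alpha>) *\<^sub>R (x k \<omega> - prox \<alpha> h (x k \<omega> - \<alpha> *\<^sub>R gradf (x k \<omega>)))))^2 \<le> \<epsilon>)
        in (\<exists>k. stop k) \<and> (\<Sum>k<(LEAST k. stop k). real (N k \<omega>)) \<le> C * \<epsilon> powr (-2))"
proof (intro exI[of _ "(res_true_budget + 2) * (1 + \<sigma>^2 * (2 + 8 / \<eta>^2))"] conjI allI impI)
  define B where "B = res_true_budget"
  define c where "c = 1 + \<sigma>^2 * (2 + 8 / \<eta>^2)"
  have B: "B \<ge> 0" unfolding B_def by (rule res_true_budget_nonneg[OF \<delta>])
  have c: "c \<ge> 0" unfolding c_def by simp
  show "(res_true_budget + 2) * (1 + \<sigma>^2 * (2 + 8 / \<eta>^2)) \<ge> 0" using B c unfolding B_def c_def by simp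
  fix \<epsilon> :: real assume \<epsilon>: "0 < \<epsilon> \<and> \<epsilon> < 1"
  obtain k0 where k0: "k0 \<le> nat \<lceil>B / \<epsilon>\<rceil> + 1" "(\<integral>\<^sup>+\<omega>. ennreal ((norm (res_true k0 \<omega>))^2) \<partial>M) \<le> ennreal \<epsilon>"
    using exists_small_Eres_true[OF \<delta>, of \<epsilon>] \<epsilon> unfolding B_def by auto
  have "0 \<le> B / \<epsilon>" using B \<epsilon> by simp
  then have "0 \<le> \<lceil>B / \<epsilon>\<rceil>" by simp
  then have "real (nat \<lceil>B / \<epsilon>\<rceil>) \<le> B / \<epsilon> + 1" using of_int_ceiling_le_add_one[of "B / \<epsilon>"] by simp
  then have "real (nat \<lceil>B / \<epsilon>\<rceil> + 1) \<le> B / \<epsilon> + 2" by simp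
  also have "\<dots> \<le> (B + 2) / \<epsilon>" using \<epsilon> by (simp add: field_simps)
  finally have K: "real (nat \<lceil>B / \<epsilon>\<rceil> + 1) * (c / \<epsilon>) \<le> (B + 2) / \<epsilon> * (c / \<epsilon>)"
    using c \<epsilon> by (intro mult_right_mono) auto
  have batch_le: "AE \<omega> in M. \<forall>k. \<epsilon> < (norm (res_true k \<omega>))^2 \<longrightarrow> real (N k \<omega>) \<le> c / \<epsilon>"
    using \<epsilon> unfolding c_def by (intro batch_le_of_res_true) auto
  have res_true_eq: "(1 / \<alpha>) *\<^sub>R (x k \<omega> - prox \<alpha> h (x k \<omega> - \<alpha> *\<^sub>R gradf (x k \<omega>))) = res_true k \<omega>" for k \<omega>
    by (simp add: res_true_def proxh_def)
  show "AE \<omega> in M.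
        let stop = (\<lambda>k. (\<integral>\<^sup>+ \<omega>'. ennreal ((norm ((1 / \<alpha>) *\<^sub>R (x k \<omega>' - prox \<alpha> h (x k \<omega>' - \<alpha> *\<^sub>R gradf (x k \<omega>')))))^2) \<partial>M) \<le> ennreal \<epsilon>
                   \<or> (norm ((1 / \<alpha>) *\<^sub>R (x k \<omega> - prox \<alpha> h (x k \<omega> - \<alpha> *\<^sub>R gradf (x k \<omega>)))))^2 \<le> \<epsilon>)
        in (\<exists>k. stop k) \<and> (\<Sum>k<(LEAST k. stop k). real (N k \<omega>))
           \<le> (res_true_budget + 2) * (1 + \<sigma>^2 * (2 + 8 / \<eta>^2)) * \<epsilon> powr (-2)"
    using batch_le unfolding res_true_eq Let_def
  proof eventually_elim
    case (elim \<omega>)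
    define stop where "stop k \<longleftrightarrow> (\<integral>\<^sup>+\<omega>'. ennreal ((norm (res_true k \<omega>'))^2) \<partial>M) \<le> ennreal \<epsilon>
      \<or> (norm (res_true k \<omega>))^2 \<le> \<epsilon>" for k
    have "stop k0" unfolding stop_def using k0(2) by simp
    moreover have "(\<Sum>k<(LEAST k. stop k). real (N k \<omega>)) \<le> real (nat \<lceil>B / \<epsilon>\<rceil> + 1) * (c / \<epsilon>)"
      using \<open>stop k0\<close> k0(1) c \<epsilon> elim unfolding stop_def
      by (intro sum_lessThan_Least_le) (auto simp: not_le)
    moreover have "(B + 2) / \<epsilon> * (c / \<epsilon>) = (B + 2) * c * \<epsilon> powr (-2)"
      using \<epsilon> by (simp add: powr_minus power2_eq_square field_simps)
    ultimately show ?case using K unfolding stop_def[abs_def] B_def c_def by auto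
  qed
qed

end

theorem mainTheorem7:
  fixes f :: "'a::euclidean_space \<Rightarrow> real" and gradf :: "'a \<Rightarrow> 'a"
    and h :: "'a \<Rightarrow> ereal" and L :: real
    and P :: "'b measure" and F :: "'a \<Rightarrow> 'b \<Rightarrow> real" and gradF :: "'a \<Rightarrow> 'b \<Rightarrow> 'a"
    and M :: "'w measure"
    and x :: "nat \<Rightarrow> 'w \<Rightarrow> 'a" and g :: "nat \<Rightarrow> 'w \<Rightarrow> 'a"
    and \<xi> :: "nat \<Rightarrow> nat \<Rightarrow> 'w \<Rightarrow> 'b" and N :: "nat \<Rightarrow> 'w \<Rightarrow> nat"
    and G :: "nat \<Rightarrow> 'w measure"
    and x0 :: 'a and \<alpha> \<sigma> \<eta> \<iota>0 \<nu> :: real and \<delta> :: "nat \<Rightarrow> real"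
  defines "G \<equiv> (\<lambda>k. gen_sigma M (insert (x 0) (g ` {..<k})))"
  \<comment> \<open>Assumption A\<close>
  assumes L_pos: "L > 0"
    and f_grad: "\<And>z. (f has_derivative (\<lambda>v. gradf z \<bullet> v)) (at z)"
    and gradf_lip: "\<And>z w. norm (gradf z - gradf w) \<le> L * norm (z - w)"
    and h_closed: "closed_fun h" and h_convex: "convex_fun h" and h_proper: "proper_fun h"
    and phi_bdd: "\<exists>m::real. \<forall>z. ereal m \<le> ereal (f z) + h z"
  \<comment> \<open>expectation problem (EX)\<close>
    and P_prob: "prob_space P"
    and F_int: "\<And>z. integrable P (F z)"
    and f_exp: "\<And>z. f z = (\<integral>s. F z s \<partial>P)"
    and F_grad: "\<And>z s. s \<in> space P \<Longrightarrow> ((\<lambda>u. F u s) has_derivative (\<lambda>v. gradF z s \<bullet> v)) (at z)"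
    and gradF_int: "\<And>z. integrable P (gradF z)"
    and gradf_exp: "\<And>z. gradf z = (\<integral>s. gradF z s \<partial>P)"
  \<comment> \<open>probability space carrying the algorithm\<close>
    and M_prob: "prob_space M"
    and g_meas: "\<And>k. g k \<in> borel_measurable M"
    and x_meas: "\<And>k. x k \<in> borel_measurable M"
  \<comment> \<open>sample sets: i.i.d. from P, independent of G k\<close>
    and \<xi>_meas: "\<And>k i. \<xi> k i \<in> measurable M P"
    and \<xi>_distr: "\<And>k i. distr M P (\<xi> k i) = P"
    and \<xi>_indep: "\<And>k. prob_space.indep_sets M
        (\<lambda>j. case j of None \<Rightarrow> sets (G k)
                     | Some i \<Rightarrow> {\<xi> k i -` A \<inter> space M | A. A \<in> sets P}) UNIV"
  \<comment> \<open>Assumption V\<close>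
    and sigma_nonneg: "\<sigma> \<ge> 0"
    and assmV: "\<And>k i. AE \<omega> in M. nn_cond_exp M (G k)
        (\<lambda>\<omega>'. ennreal ((norm (gradF (x k \<omega>') (\<xi> k i \<omega>') - gradf (x k \<omega>'))) ^ 2)) \<omega>
        \<le> ennreal (\<sigma> ^ 2)"
  \<comment> \<open>parameters\<close>
    and eta: "0 < \<eta>" "\<eta> < 1"
    and iota: "0 \<le> \<iota>0" "\<iota>0 < sqrt ((1 - \<eta>) / 2)"
    and nu_pos: "\<nu> > 0"
    and alpha: "\<alpha> > 0" "\<alpha> \<le> (1 - \<eta>) / (2 * L)"
  \<comment> \<open>the algorithm, Option I (y_k = x_k), constant step alpha\<close>
    and x_init: "\<And>\<omega>. \<omega> \<in> space M \<Longrightarrow> x 0 \<omega> = x0"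
    and x_step: "\<And>k \<omega>. \<omega> \<in> space M \<Longrightarrow> x (Suc k) \<omega> = prox \<alpha> h (x k \<omega> - \<alpha> *\<^sub>R g k \<omega>)"
  \<comment> \<open>E_k[R_alpha(y_k)] is well defined\<close>
    and R_int: "\<And>k. integrable M (\<lambda>\<omega>. (1 / \<alpha>) *\<^sub>R (x k \<omega> - x (Suc k) \<omega>))"
  \<comment> \<open>sampled estimate with the sample-size rule\<close>
    and sample_rule: "\<And>k. AE \<omega> in M.
        (let D = \<eta>^2 / 4 * (norm (vcond_exp M (G k) (\<lambda>\<omega>'. (1 / \<alpha>) *\<^sub>R (x k \<omega>' - x (Suc k) \<omega>')) \<omega>))^2
                 + \<iota>0^2 * (\<delta> k)^2
         in (D > 0 \<longrightarrow> N k \<omega> = max 1 (nat \<lceil>\<sigma>^2 / D\<rceil>)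
                       \<and> g k \<omega> = (1 / real (N k \<omega>)) *\<^sub>R (\<Sum>i<N k \<omega>. gradF (x k \<omega>) (\<xi> k i \<omega>)))
          \<and> (D = 0 \<longrightarrow> g k \<omega> = gradf (x k \<omega>)))"
  shows
    "(\<delta> = (\<lambda>k. 1 / (real k + 1) powr (1 + \<nu>)) \<longrightarrow>
       (\<exists>C \<epsilon>0. \<epsilon>0 > 0 \<and> (\<forall>\<epsilon>. 0 < \<epsilon> \<and> \<epsilon> < \<epsilon>0 \<longrightarrow>
          (AE \<omega> in M.
             let stop = (\<lambda>k. (\<integral>\<^sup>+ \<omega>'. ennreal ((norm ((1 / \<alpha>) *\<^sub>R (x k \<omega>' - prox \<alpha> h (x k \<omega>' - \<alpha> *\<^sub>R gradf (x k \<omega>')))))^2) \<partial>M) \<le> ennreal \<epsilon>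
                        \<or> (norm ((1 / \<alpha>) *\<^sub>R (x k \<omega> - prox \<alpha> h (x k \<omega> - \<alpha> *\<^sub>R gradf (x k \<omega>)))))^2 \<le> \<epsilon>)
             in (\<exists>k. stop k) \<and>
                (\<Sum>k<(LEAST k. stop k). real (N k \<omega>)) \<le> C * \<epsilon> powr (-(2 + \<nu>))))))
     \<and> (\<delta> = (\<lambda>k. 0) \<longrightarrow>
       (\<exists>C \<epsilon>0. \<epsilon>0 > 0 \<and> (\<forall>\<epsilon>. 0 < \<epsilon> \<and> \<epsilon> < \<epsilon>0 \<longrightarrow>
          (AE \<omega> in M.
             let stop = (\<lambda>k. (\<integral>\<^sup>+ \<omega>'. ennreal ((norm ((1 / \<alpha>) *\<^sub>R (x k \<omega>' - prox \<alpha> h (x k \<omega>' - \<alpha> *\<^sub>R gradf (x k \<omega>')))))^2) \<partial>M) \<le> ennreal \<epsilon>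
                        \<or> (norm ((1 / \<alpha>) *\<^sub>R (x k \<omega> - prox \<alpha> h (x k \<omega> - \<alpha> *\<^sub>R gradf (x k \<omega>)))))^2 \<le> \<epsilon>)
             in (\<exists>k. stop k) \<and>
                (\<Sum>k<(LEAST k. stop k). real (N k \<omega>)) \<le> C * \<epsilon> powr (-2)))))"
proof -
  interpret stochastic_prox_grad f gradf h L P F gradF M x g \<xi> N G x0 \<alpha> \<sigma> \<eta> \<iota>0 \<delta>
    by (rule stochastic_prox_grad.intro) (fact | simp add: G_def)+
  have "2 \<le> 2 + \<nu>" using nu_pos by simp
  moreover have "summable (\<lambda>k. (\<delta> k)^2)" if "\<delta> = (\<lambda>k. 1 / (real k + 1) powr (1 + \<nu>))"
    using summable_inverse_powr_sq[OF nu_pos] that by simp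
  moreover have "summable (\<lambda>k. (\<delta> k)^2)" if "\<delta> = (\<lambda>k. 0)" using that by simp
  ultimately show ?thesis
    using complexity_bound_weaken[OF oracle_complexity] by blast
qed

end
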